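(* For $n\ge1$, $\beta>0$ and $h\in\mathbb{R}$, let $\sigma=(\sigma_1,\dots,\sigma_n)\in\{-1,1\}^n$ have law \[ \mathbb{P}(\sigma)=Z^{-1}\exp\Bigl\{\frac{\beta}{n}\sum_{i<j}\sigma_i\sigma_j+h\sum_i\sigma_i\Bigr\}, \] with $Z$ the normalizing constant, let $W=\sum_{i=1}^n\sigma_i$, and let $\delta=\delta(n)=(1-(-1)^n)/2$. If $0<\beta<1$ and $h=0$, there is a constant $C$ depending only on $\beta$ such that for all $n$, \[ d_{\mathrm{loc}}\Bigl(\mathcal{L}\bigl(\tfrac{W+\delta}{2}\bigr),\mathrm{TP}\bigl(0,\tfrac{n}{4(1-\beta)}\bigr)\Bigr)\le Cn^{-3/4},\qquad d_{\mathrm{TV}}\Bigl(\mathcal{L}\bigl(\tfrac{W+\delta}{2}\bigr),\mathrm{TP}\bigl(0,\tfrac{n}{4(1-\beta)}\bigr)\Bigr)\le Cn^{-1/3}. \] If $0<\beta<1$ and $h\in\mathbb{R}$, and $m_0$ is the unique solution of $m=\tanh(\beta m+h)$, then as $n\to\infty$, \[ d_{\mathrm{loc}}\Bigl(\mathcal{L}\bigl(\tfrac{W+\delta}{2}\bigr),\mathrm{TP}\Bigl(\tfrac{nm_0}{2},\tfrac{n(1-m_0^2)}{4(1-\beta+\beta m_0^2)}\Bigr)\Bigr)=o(n^{-1/2}). \]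
   Context: For integer-supported laws with distribution functions $F,G$ (where $F(j)=\mathbb{P}[X\le j]$), $d_{\mathrm{loc}}(F,G)=\sup_{j\in\mathbb{Z}}|\Delta F(j)-\Delta G(j)|$ and $d_{\mathrm{TV}}(F,G)=\frac12\sum_{j\in\mathbb{Z}}|\Delta F(j)-\Delta G(j)|$, where $\Delta F(j)=F(j+1)-F(j)$. Translated Poisson: for $\mu\in\mathbb{R}$, $s^2>0$, $Z\sim\mathrm{TP}(\mu,s^2)$ means $Z-\lfloor\mu-s^2\rfloor\sim\mathrm{Po}(s^2+\gamma)$ with $\gamma=\mu-s^2-\lfloor\mu-s^2\rfloor$. Note $(W+\delta)/2$ is integer valued. *)

theory Defs
  imports "HOL-Analysis.Analysis" "HOL-Library.Landau_Symbols"
begin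

definition cw_configs :: "nat \<Rightarrow> int list set" where
  "cw_configs n = {xs. length xs = n \<and> set xs \<subseteq> {-1, 1}}"

definition cw_weight :: "real \<Rightarrow> real \<Rightarrow> nat \<Rightarrow> int list \<Rightarrow> real" where
  "cw_weight \<beta> h n s = exp (\<beta> / real n *
      (\<Sum>i<n. \<Sum>j<n. if i < j then real_of_int (s ! i * s ! j) else 0)
      + h * (\<Sum>i<n. real_of_int (s ! i)))"

definition cw_Z :: "real \<Rightarrow> real \<Rightarrow> nat \<Rightarrow> real" where
  "cw_Z \<beta> h n = (\<Sum>s\<in>cw_configs n. cw_weight \<beta> h n s)"

definition cw_W :: "int list \<Rightarrow> int" where
  "cw_W s = sum_list s"

definition cw_delta :: "nat \<Rightarrow> int" where
  "cw_delta n = (1 - (-1) ^ n) div 2"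

text \<open>Probability mass function of (W + delta)/2 (an integer, since W + delta is even).\<close>
definition cw_pmf :: "real \<Rightarrow> real \<Rightarrow> nat \<Rightarrow> int \<Rightarrow> real" where
  "cw_pmf \<beta> h n k =
     (\<Sum>s\<in>{s\<in>cw_configs n. (cw_W s + cw_delta n) div 2 = k}. cw_weight \<beta> h n s) / cw_Z \<beta> h n"

text \<open>Translated Poisson TP(mu, s2): Z - floor(mu - s2) ~ Po(s2 + gamma).\<close>
definition tp_pmf :: "real \<Rightarrow> real \<Rightarrow> int \<Rightarrow> real" where
  "tp_pmf \<mu> s2 k =
     (let a = \<lfloor>\<mu> - s2\<rfloor>; \<gamma> = \<mu> - s2 - real_of_int a; lam = s2 + \<gamma> in
      if a \<le> k then exp (- lam) * lam ^ nat (k - a) / fact (nat (k - a)) else 0)"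

definition cdf_of :: "(int \<Rightarrow> real) \<Rightarrow> int \<Rightarrow> real" where
  "cdf_of p j = infsum p {..j}"

definition Delta :: "(int \<Rightarrow> real) \<Rightarrow> int \<Rightarrow> real" where
  "Delta F j = F (j + 1) - F j"

definition d_loc :: "(int \<Rightarrow> real) \<Rightarrow> (int \<Rightarrow> real) \<Rightarrow> real" where
  "d_loc F G = (SUP j\<in>(UNIV::int set). \<bar>Delta F j - Delta G j\<bar>)"

definition d_TV :: "(int \<Rightarrow> real) \<Rightarrow> (int \<Rightarrow> real) \<Rightarrow> real" where
  "d_TV F G = infsum (\<lambda>j. \<bar>Delta F j - Delta G j\<bar>) (UNIV::int set) / 2"

end

theory Submission
  imports Defs "HOL-Real_Asymp.Real_Asymp"
begin

text \<open>With \<open>j\<close> spins up, the law of \<open>(W + \<delta>) / 2\<close> is proportional to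
  \<open>(n choose j) * exp (\<beta> ((2j - n)^2 - n) / (2n) + h (2j - n))\<close>, so the ratio of consecutive
  probabilities is explicit. Near the mean \<open>n m0 / 2\<close> its logarithm decreases with slope
  \<open>-\<kappa> / n\<close>, where \<open>1 / \<kappa> = (1 - m0^2) / (4 (1 - \<beta> + \<beta> m0^2))\<close>, exactly like the
  ratio \<open>\<lambda> / (k + 1)\<close> of a Poisson law with \<open>\<lambda> = n / \<kappa>\<close>. Summing these first-order expansions
  over a window of half-width \<open>T = n^(5/9)\<close> shows that the two log-pmfs differ there by a constant
  plus \<open>O(T / n + T^3 / n^2) = O(n^(-1/3))\<close>. Both laws have geometrically small tails outside
  the window and total mass 1, so the constant is \<open>O(n^(-1/3))\<close> too. This gives the total
  variation bound; multiplying the relative error by \<open>max Q = O(n^(-1/2))\<close> gives a local bound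
  \<open>O(n^(-5/6))\<close>. The case \<open>h = 0\<close> has \<open>m0 = 0\<close>, and for small \<open>n\<close> both distances are
  at most 1.\<close>

section \<open>Distances between laws on the integers\<close>

lemma Delta_cdf_of:
  fixes p :: "int \<Rightarrow> real"
  assumes "p summable_on UNIV"
  shows "Delta (cdf_of p) j = p (j + 1)"
proof -
  have "p summable_on {..j}" using assms summable_on_subset by blast
  moreover have "{..j + 1} = insert (j + 1) {..j}" by auto
  ultimately show ?thesis unfolding Delta_def cdf_of_def by (simp add: infsum_insert)
qed

lemma d_loc_cdf_of_le:
  fixes p q :: "int \<Rightarrow> real"
  assumes "p summable_on UNIV" "q summable_on UNIV" "\<And>k. \<bar>p k - q k\<bar> \<le> B"
  shows "d_loc (cdf_of p) (cdf_of q) \<le> B"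
  unfolding d_loc_def Delta_cdf_of[OF assms(1)] Delta_cdf_of[OF assms(2)]
  by (rule cSUP_least) (auto intro: assms(3))

lemma d_TV_cdf_of:
  fixes p q :: "int \<Rightarrow> real"
  assumes "p summable_on UNIV" "q summable_on UNIV"
  shows "d_TV (cdf_of p) (cdf_of q) = infsum (\<lambda>k. \<bar>p k - q k\<bar>) UNIV / 2"
proof -
  have "bij_betw (\<lambda>j::int. j + 1) UNIV UNIV"
    by (rule bij_betwI[where g = "\<lambda>j. j - 1"]) auto
  from infsum_reindex_bij_betw[OF this, of "\<lambda>k. \<bar>p k - q k\<bar>"] show ?thesis
    unfolding d_TV_def Delta_cdf_of[OF assms(1)] Delta_cdf_of[OF assms(2)] by simp
qed

lemma pmf_le_infsum:
  fixes p :: "'a \<Rightarrow> real"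
  assumes "\<And>i. 0 \<le> p i" "p summable_on UNIV" "k \<in> A"
  shows "p k \<le> infsum p A"
proof -
  have "p summable_on A" using assms(2) summable_on_subset by blast
  then have "sum p {k} \<le> infsum p A"
    by (rule finite_sum_le_infsum) (use assms in auto)
  then show ?thesis by simp
qed

lemma pmf_le_one:
  fixes p :: "'a \<Rightarrow> real"
  assumes "\<And>i. 0 \<le> p i" "(p has_sum 1) UNIV"
  shows "p k \<le> 1"
  using pmf_le_infsum[of p k UNIV] assms by (auto simp: has_sum_iff)

lemma abs_diff_summable_on:
  fixes p q :: "'a \<Rightarrow> real"
  assumes "p summable_on UNIV" "q summable_on UNIV" "\<And>k. p k \<ge> 0" "\<And>k. q k \<ge> 0"
  shows "(\<lambda>k. \<bar>p k - q k\<bar>) summable_on A"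
proof -
  have "(\<lambda>k. p k + q k) summable_on UNIV" using assms summable_on_add by blast
  then have "(\<lambda>k. \<bar>p k - q k\<bar>) summable_on UNIV"
    by (rule summable_on_comparison_test) (use assms in \<open>auto simp: abs_le_iff\<close>)
  then show ?thesis using summable_on_subset by blast
qed

lemma infsum_abs_diff_le_window:
  fixes p q :: "'a \<Rightarrow> real"
  assumes "p summable_on UNIV" "q summable_on UNIV" "\<And>k. p k \<ge> 0" "\<And>k. q k \<ge> 0"
    and "finite I" "\<And>k. k \<in> I \<Longrightarrow> \<bar>p k - q k\<bar> \<le> e k"
    and "infsum p (- I) \<le> \<tau>p" "infsum q (- I) \<le> \<tau>q"
  shows "infsum (\<lambda>k. \<bar>p k - q k\<bar>) UNIV \<le> sum e I + \<tau>p + \<tau>q"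
proof -
  let ?d = "\<lambda>k. \<bar>p k - q k\<bar>"
  have sums: "?d summable_on I" "?d summable_on - I" "p summable_on - I" "q summable_on - I"
    using abs_diff_summable_on[OF assms(1-4)] assms(1,2) summable_on_subset by blast+
  have "infsum ?d UNIV = infsum ?d (I \<union> - I)" by simp
  also have "\<dots> = sum ?d I + infsum ?d (- I)"
    using infsum_Un_disjoint[OF sums(1,2)] assms(5) by simp
  also have "sum ?d I \<le> sum e I" by (rule sum_mono) (use assms(6) in auto)
  also have "infsum ?d (- I) \<le> infsum (\<lambda>k. p k + q k) (- I)"
    by (rule infsum_mono[OF sums(2) summable_on_add[OF sums(3,4)]])
      (use assms(3,4) in \<open>auto simp: abs_le_iff\<close>)
  also have "\<dots> = infsum p (- I) + infsum q (- I)" by (rule infsum_add[OF sums(3,4)])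
  finally show ?thesis using assms(7,8) by linarith
qed

lemma sum_eq_one_minus_infsum_compl:
  fixes f :: "'a \<Rightarrow> real"
  assumes "(f has_sum 1) UNIV" "finite I"
  shows "sum f I = 1 - infsum f (- I)"
proof -
  have sums: "f summable_on I" "f summable_on - I"
    using has_sum_imp_summable[OF assms(1)] summable_on_subset by blast+
  have "1 = infsum f (I \<union> - I)" using infsumI[OF assms(1)] by simp
  also have "\<dots> = sum f I + infsum f (- I)" using infsum_Un_disjoint[OF sums] assms(2) by simp
  finally show ?thesis by simp
qed

lemma d_loc_cdf_of_nonneg:
  fixes p q :: "int \<Rightarrow> real"
  assumes "p summable_on UNIV" "q summable_on UNIV" "\<And>k. \<bar>p k - q k\<bar> \<le> B"
  shows "0 \<le> d_loc (cdf_of p) (cdf_of q)"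
proof -
  have "bdd_above (range (\<lambda>j. \<bar>Delta (cdf_of p) j - Delta (cdf_of q) j\<bar>))"
    unfolding Delta_cdf_of[OF assms(1)] Delta_cdf_of[OF assms(2)] using assms(3) by (intro bdd_aboveI) auto
  then have "\<bar>Delta (cdf_of p) 0 - Delta (cdf_of q) 0\<bar> \<le> d_loc (cdf_of p) (cdf_of q)"
    unfolding d_loc_def by (rule cSUP_upper[rotated]) simp
  then show ?thesis by linarith
qed

lemma
  fixes p q :: "int \<Rightarrow> real"
  assumes "\<And>k. 0 \<le> p k" "\<And>k. 0 \<le> q k" "(p has_sum 1) UNIV" "(q has_sum 1) UNIV"
  shows d_loc_cdf_of_pmf_bounds: "0 \<le> d_loc (cdf_of p) (cdf_of q)" "d_loc (cdf_of p) (cdf_of q) \<le> 1"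
    and d_TV_cdf_of_pmf_le_one: "d_TV (cdf_of p) (cdf_of q) \<le> 1"
proof -
  have sums: "p summable_on UNIV" "q summable_on UNIV" using assms(3,4) by (auto simp: has_sum_iff)
  have le1: "p k \<le> 1" "q k \<le> 1" for k
    using pmf_le_one[OF assms(1,3)] pmf_le_one[OF assms(2,4)] by auto
  have abs_le1: "\<bar>p k - q k\<bar> \<le> 1" for k using le1[of k] assms(1,2)[of k] by (simp add: abs_le_iff)
  show "0 \<le> d_loc (cdf_of p) (cdf_of q)" by (rule d_loc_cdf_of_nonneg[OF sums abs_le1])
  show "d_loc (cdf_of p) (cdf_of q) \<le> 1" by (rule d_loc_cdf_of_le[OF sums abs_le1])
  have "infsum p (- {}) \<le> 1" "infsum q (- {}) \<le> 1"
    using infsumI[OF assms(3)] infsumI[OF assms(4)] by simp_all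
  from infsum_abs_diff_le_window[OF sums assms(1,2) _ _ this] have
    "infsum (\<lambda>k. \<bar>p k - q k\<bar>) UNIV \<le> 2" by simp
  then show "d_TV (cdf_of p) (cdf_of q) \<le> 1" unfolding d_TV_cdf_of[OF sums] by simp
qed

lemma exp_double_div_one_minus_le:
  fixes \<epsilon> \<tau> :: real
  assumes "0 \<le> \<epsilon>" "\<epsilon> \<le> 1/4" "0 \<le> \<tau>" "\<tau> \<le> 1/2"
  shows "exp (2 * \<epsilon>) / (1 - \<tau>) \<le> 1 + 8 * (\<epsilon> + \<tau>)"
proof -
  have "exp (2 * \<epsilon>) \<le> 1 + 4 * \<epsilon>" using real_exp_bound_lemma[of "2 * \<epsilon>"] assms by simp
  moreover have "1 / (1 - \<tau>) \<le> 1 + 2 * \<tau>"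
    using assms mult_left_mono[of \<tau> "1/2" \<tau>] by (simp add: field_simps)
  ultimately have "exp (2 * \<epsilon>) * (1 / (1 - \<tau>)) \<le> (1 + 4 * \<epsilon>) * (1 + 2 * \<tau>)"
    by (rule mult_mono) (use assms in auto)
  also have "\<dots> \<le> 1 + 8 * (\<epsilon> + \<tau>)"
    using assms mult_right_mono[of \<epsilon> "1/4" \<tau>] by (simp add: algebra_simps)
  finally show ?thesis by simp
qed

lemma one_minus_le_exp_neg_double:
  fixes \<epsilon> \<tau> :: real
  assumes "0 \<le> \<epsilon>" "0 \<le> \<tau>" "\<tau> \<le> 1"
  shows "1 - 8 * (\<epsilon> + \<tau>) \<le> (1 - \<tau>) * exp (- (2 * \<epsilon>))"
proof -
  have "(1 - \<tau>) * (1 - 2 * \<epsilon>) \<le> (1 - \<tau>) * exp (- (2 * \<epsilon>))"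
    using exp_ge_add_one_self[of "- (2 * \<epsilon>)"] assms by (intro mult_left_mono) auto
  moreover have "1 - 8 * (\<epsilon> + \<tau>) \<le> (1 - \<tau>) * (1 - 2 * \<epsilon>)"
    using assms mult_nonneg_nonneg[of \<epsilon> \<tau>] by (simp add: algebra_simps)
  ultimately show ?thesis by linarith
qed

text \<open>Both vectors have mass close to 1 on the window, which forces the constant \<open>L\<close> to be
  close to 0.\<close>
lemma abs_diff_le_of_log_ratio_window:
  fixes p q :: "'a \<Rightarrow> real"
  assumes fin: "finite I"
    and pos: "\<And>k. k \<in> I \<Longrightarrow> p k > 0" "\<And>k. k \<in> I \<Longrightarrow> q k > 0"
    and log_ratio: "\<And>k. k \<in> I \<Longrightarrow> \<bar>ln (p k) - ln (q k) - L\<bar> \<le> \<epsilon>"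
    and \<epsilon>: "0 \<le> \<epsilon>" "\<epsilon> \<le> 1/4" and \<tau>: "0 \<le> \<tau>" "\<tau> \<le> 1/2"
    and mass_p: "1 - \<tau> \<le> sum p I" "sum p I \<le> 1"
    and mass_q: "1 - \<tau> \<le> sum q I" "sum q I \<le> 1"
    and k: "k \<in> I"
  shows "\<bar>p k - q k\<bar> \<le> 8 * (\<epsilon> + \<tau>) * q k"
proof -
  have p_eq: "p i = exp (ln (p i) - ln (q i)) * q i" if "i \<in> I" for i
    using pos[OF that] by (simp add: exp_diff)
  have ratio: "exp (L - \<epsilon>) * q i \<le> p i" "p i \<le> exp (L + \<epsilon>) * q i" if "i \<in> I" for i
  proof -
    have "L - \<epsilon> \<le> ln (p i) - ln (q i)" "ln (p i) - ln (q i) \<le> L + \<epsilon>"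
      using log_ratio[OF that] by (simp_all add: abs_le_iff)
    then have "exp (L - \<epsilon>) * q i \<le> exp (ln (p i) - ln (q i)) * q i"
      "exp (ln (p i) - ln (q i)) * q i \<le> exp (L + \<epsilon>) * q i"
      using pos(2)[OF that] by (simp_all add: mult_right_mono)
    then show "exp (L - \<epsilon>) * q i \<le> p i" "p i \<le> exp (L + \<epsilon>) * q i" using p_eq[OF that] by simp_all
  qed
  have "exp (L - \<epsilon>) * (1 - \<tau>) \<le> exp (L - \<epsilon>) * sum q I" using mass_q by simp
  also have "\<dots> \<le> sum p I" unfolding sum_distrib_left by (rule sum_mono) (rule ratio(1))
  finally have "exp (L - \<epsilon>) * (1 - \<tau>) \<le> 1" using mass_p by linarith
  then have L_up: "exp L * (1 - \<tau>) \<le> exp \<epsilon>" by (simp add: exp_diff field_simps)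
  have "1 - \<tau> \<le> sum p I" by (rule mass_p(1))
  also have "\<dots> \<le> exp (L + \<epsilon>) * sum q I" unfolding sum_distrib_left by (rule sum_mono) (rule ratio(2))
  also have "\<dots> \<le> exp (L + \<epsilon>)" using mass_q by simp
  finally have L_lo: "(1 - \<tau>) * exp (- \<epsilon>) \<le> exp L" by (simp add: exp_add exp_minus field_simps)
  define r where "r = p k / q k"
  have r_up: "r \<le> 1 + 8 * (\<epsilon> + \<tau>)"
  proof -
    have "r \<le> exp L * exp \<epsilon>" using ratio(2)[OF k] pos(2)[OF k] by (simp add: r_def exp_add field_simps)
    also have "\<dots> \<le> exp \<epsilon> / (1 - \<tau>) * exp \<epsilon>"
      using L_up \<tau> by (intro mult_right_mono) (simp_all add: field_simps)
    also have "\<dots> = exp (2 * \<epsilon>) / (1 - \<tau>)" by (simp add: exp_add[symmetric])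
    finally show ?thesis using exp_double_div_one_minus_le[OF \<epsilon> \<tau>] by linarith
  qed
  have r_lo: "1 - 8 * (\<epsilon> + \<tau>) \<le> r"
  proof -
    have "(1 - \<tau>) * exp (- (2 * \<epsilon>)) = (1 - \<tau>) * exp (- \<epsilon>) * exp (- \<epsilon>)"
      by (simp add: exp_add[symmetric])
    also have "\<dots> \<le> exp L * exp (- \<epsilon>)" using L_lo by simp
    also have "\<dots> \<le> r" using ratio(1)[OF k] pos(2)[OF k] by (simp add: r_def exp_diff exp_minus field_simps)
    finally show ?thesis using one_minus_le_exp_neg_double[of \<epsilon> \<tau>] \<epsilon> \<tau> by linarith
  qed
  have "\<bar>p k - q k\<bar> = \<bar>r - 1\<bar> * q k"
    using pos(2)[OF k] by (simp add: r_def abs_mult[symmetric] field_simps)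
  also have "\<dots> \<le> 8 * (\<epsilon> + \<tau>) * q k" using r_up r_lo pos(2)[OF k] by (intro mult_right_mono) auto
  finally show ?thesis .
qed

section \<open>Geometric tails\<close>

lemma infsum_atLeast_le_geometric:
  fixes f :: "int \<Rightarrow> real"
  assumes le1: "\<And>i. f i \<le> 1" and r: "0 \<le> \<rho>" "\<rho> < 1"
    and step: "\<And>i. i \<ge> b \<Longrightarrow> f (i+1) \<le> \<rho> * f i" and sm: "f summable_on UNIV"
  shows "infsum f {b + int L..} \<le> \<rho>^L / (1-\<rho>)"
proof -
  have pw: "f (b + int t) \<le> \<rho>^t" for t
  proof (induction t)
    case 0 show ?case using le1 by simp
  next
    case (Suc t)
    have "f (b + int (Suc t)) = f ((b + int t) + 1)" by (simp add: algebra_simps)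
    also have "\<dots> \<le> \<rho> * f (b + int t)" by (rule step) simp
    also have "\<dots> \<le> \<rho> * \<rho>^t" by (rule mult_left_mono[OF Suc r(1)])
    finally show ?case by simp
  qed
  define A where "A = {b + int L..}"
  have bij: "bij_betw (\<lambda>t::nat. b + int L + int t) UNIV A"
    unfolding A_def
    by (rule bij_betwI[where g="\<lambda>i. nat (i - b - int L)"]) auto
  have "f summable_on A" using sm summable_on_subset by blast
  hence "(f has_sum infsum f A) A" using summable_iff_has_sum_infsum by blast
  hence h1: "((\<lambda>t. f (b + int L + int t)) has_sum infsum f A) UNIV"
    using has_sum_reindex_bij_betw[OF bij] by blast
  have "((\<lambda>t::nat. \<rho>^t) has_sum (1 / (1-\<rho>))) UNIV"
    by (rule sums_nonneg_imp_has_sum) (use geometric_sums[of \<rho>] r in auto)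
  from has_sum_cmult_right[OF this, of "\<rho>^L"]
  have geom: "((\<lambda>t::nat. \<rho>^L * \<rho>^t) has_sum (\<rho>^L / (1-\<rho>))) UNIV" by simp
  have "infsum f A \<le> \<rho>^L / (1-\<rho>)"
  proof (rule has_sum_mono[OF h1 geom])
    fix t :: nat
    have "f (b + int L + int t) = f (b + int (L + t))" by (simp add: add.assoc)
    also have "\<dots> \<le> \<rho>^(L+t)" by (rule pw)
    finally show "f (b + int L + int t) \<le> \<rho>^L * \<rho>^t" by (simp add: power_add)
  qed
  thus ?thesis unfolding A_def .
qed

lemma infsum_atMost_le_geometric:
  fixes f :: "int \<Rightarrow> real"
  assumes le1: "\<And>i. f i \<le> 1" and r: "0 \<le> \<rho>" "\<rho> < 1"
    and step: "\<And>i. i \<le> b \<Longrightarrow> f (i - 1) \<le> \<rho> * f i" and sm: "f summable_on UNIV"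
  shows "infsum f {..b - int L} \<le> \<rho>^L / (1-\<rho>)"
proof -
  define g where "g = (\<lambda>i. f (- i))"
  have bij: "bij_betw uminus (UNIV::int set) UNIV" by (rule bij_betwI[where g=uminus]) auto
  have sg: "g summable_on UNIV" unfolding g_def using summable_on_reindex_bij_betw[OF bij] sm by blast
  have "infsum g {- b + int L..} \<le> \<rho>^L / (1-\<rho>)"
  proof (rule infsum_atLeast_le_geometric[OF _ r _ sg])
    fix i :: int assume "i \<ge> - b"
    hence "-i \<le> b" by simp
    from step[OF this] have "f (-i - 1) \<le> \<rho> * f (-i)" .
    moreover have "-(i+1) = -i - 1" by simp
    ultimately show "g (i+1) \<le> \<rho> * g i" unfolding g_def by metis
  qed (use le1 in \<open>auto simp: g_def\<close>)
  moreover have "infsum g {- b + int L..} = infsum f {..b - int L}"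
  proof -
    have b2: "bij_betw uminus {- b + int L..} {..b - int L}"
      by (rule bij_betwI[where g=uminus]) auto
    show ?thesis unfolding g_def using infsum_reindex_bij_betw[OF b2, of f] by simp
  qed
  ultimately show ?thesis by simp
qed

lemma pmf_le_of_block:
  fixes q :: "'a \<Rightarrow> real" and g :: "nat \<Rightarrow> 'a"
  assumes nn: "\<And>i. 0 \<le> q i" and hs: "(q has_sum 1) UNIV" and inj: "inj g" and M: "M > 0"
    and blk: "\<And>t. t < M \<Longrightarrow> q k / 2 \<le> q (g t)"
  shows "q k \<le> 2 / real M"
proof -
  have "real M * (q k / 2) = (\<Sum>t<M. q k / 2)" by simp
  also have "\<dots> \<le> (\<Sum>t<M. q (g t))" by (rule sum_mono) (use blk in auto)
  also have "\<dots> = sum q (g ` {..<M})" using inj by (simp add: sum.reindex inj_on_def inj_def)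
  also have "\<dots> \<le> infsum q UNIV"
    by (rule finite_sum_le_infsum) (use hs nn in \<open>auto simp: has_sum_iff\<close>)
  also have "\<dots> = 1" using hs infsumI by blast
  finally have "real M * (q k / 2) \<le> 1" .
  thus ?thesis using M by (simp add: field_simps)
qed

lemma geometric_sum_tail_le:
  fixes x T :: real
  assumes x: "0 < x" "x \<le> 1" and L: "T / 2 - 2 \<le> real L"
  shows "exp (- x) ^ L / (1 - exp (- x)) \<le> exp (- x * (T / 2 - 2)) * (2 / x)"
proof -
  have "exp (- x) ^ L = exp (- x * real L)" by (simp add: exp_of_nat_mult[symmetric] mult.commute)
  also have "\<dots> \<le> exp (- x * (T / 2 - 2))" using L x by (simp add: mult_left_mono)
  finally have num: "exp (- x) ^ L \<le> exp (- x * (T / 2 - 2))" .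
  have "exp (- x) \<le> 1 / (1 + x)"
    using exp_ge_add_one_self[of x] x by (simp add: exp_minus inverse_eq_divide divide_left_mono)
  then have "1 - exp (- x) \<ge> x / (1 + x)" using x by (simp add: field_simps)
  moreover have "x / (1 + x) \<ge> x / 2" using x by (intro divide_left_mono) auto
  ultimately have "1 - exp (- x) \<ge> x / 2" by linarith
  then have "exp (- x) ^ L / (1 - exp (- x)) \<le> exp (- x * (T / 2 - 2)) / (x / 2)"
    using num x by (intro frac_le) auto
  then show ?thesis by simp
qed

lemma infsum_outside_window_le:
  fixes f :: "int \<Rightarrow> real" and x T c :: real
  assumes nn: "\<And>i. 0 \<le> f i" and le1: "\<And>i. f i \<le> 1" and sm: "f summable_on UNIV"
    and x: "0 < x" "x \<le> 1" and T4: "T \<ge> 4"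
    and up: "\<And>k. k \<ge> \<lceil>c + T / 2\<rceil> \<Longrightarrow> f (k+1) \<le> exp (- x) * f k"
    and down: "\<And>k. k \<le> \<lfloor>c - T / 2\<rfloor> \<Longrightarrow> f (k - 1) \<le> exp (- x) * f k"
  shows "infsum f {k. c + T < real_of_int k} \<le> exp (- x * (T / 2 - 2)) * (2 / x)"
    "infsum f {k. real_of_int k < c - T} \<le> exp (- x * (T / 2 - 2)) * (2 / x)"
proof -
  define \<rho> where "\<rho> = exp (- x)"
  define L where "L = nat (\<lfloor>T / 2\<rfloor> - 1)"
  have r: "0 \<le> \<rho>" "\<rho> < 1" unfolding \<rho>_def using x by auto
  have L1: "real L \<le> T / 2 - 1" "T / 2 - 2 \<le> real L" unfolding L_def using T4 by linarith+
  have bnd: "\<rho>^L / (1 - \<rho>) \<le> exp (- x * (T / 2 - 2)) * (2 / x)"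
    unfolding \<rho>_def by (rule geometric_sum_tail_le[OF x L1(2)])
  have sub: "f summable_on A" for A using sm summable_on_subset by blast
  define b1 where "b1 = \<lceil>c + T / 2\<rceil>"
  have "infsum f {k. c + T < real_of_int k} \<le> infsum f {b1 + int L..}"
    by (rule infsum_mono2[OF sub sub]) (use L1 nn in \<open>auto simp: b1_def\<close>, linarith)
  also have "\<dots> \<le> \<rho>^L / (1 - \<rho>)"
    by (rule infsum_atLeast_le_geometric[OF le1 r _ sm]) (use up in \<open>auto simp: b1_def \<rho>_def\<close>)
  finally show "infsum f {k. c + T < real_of_int k} \<le> exp (- x * (T / 2 - 2)) * (2 / x)" using bnd by linarith
  define b2 where "b2 = \<lfloor>c - T / 2\<rfloor>"
  have "infsum f {k. real_of_int k < c - T} \<le> infsum f {..b2 - int L}"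
    by (rule infsum_mono2[OF sub sub]) (use L1 nn in \<open>auto simp: b2_def\<close>, linarith)
  also have "\<dots> \<le> \<rho>^L / (1 - \<rho>)"
    by (rule infsum_atMost_le_geometric[OF le1 r _ sm]) (use down in \<open>auto simp: b2_def \<rho>_def\<close>)
  finally show "infsum f {k. real_of_int k < c - T} \<le> exp (- x * (T / 2 - 2)) * (2 / x)" using bnd by linarith
qed

section \<open>The Curie--Weiss law of \<open>(W + \<delta>) / 2\<close>\<close>

definition cw_ones :: "int list \<Rightarrow> nat" where "cw_ones s = length (filter (\<lambda>x. x = 1) s)"

text \<open>A configuration with \<open>j\<close> spins up has \<open>W = 2j - n\<close> and pair sum \<open>(W^2 - n) / 2\<close>, hence
  weight \<open>exp (cw_energy \<beta> h n j)\<close>; \<open>cw_mass\<close> is the total weight of these configurations.\<close>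

definition cw_energy :: "real \<Rightarrow> real \<Rightarrow> nat \<Rightarrow> real \<Rightarrow> real" where
  "cw_energy \<beta> h n j = \<beta> / real n * (((2*j - real n)^2 - real n) / 2) + h * (2*j - real n)"

definition cw_mass :: "real \<Rightarrow> real \<Rightarrow> nat \<Rightarrow> int \<Rightarrow> real" where
  "cw_mass \<beta> h n j = (if 0 \<le> j then real (n choose nat j) * exp (cw_energy \<beta> h n (real_of_int j)) else 0)"

lemma sum_list_pm_one: "set s \<subseteq> {-1,1} \<Longrightarrow> sum_list s = 2 * int (cw_ones s) - int (length s)"
  unfolding cw_ones_def by (induction s) auto

lemma cw_pair_sum:
  fixes s :: "int list"
  assumes "s \<in> cw_configs n"
  shows "(\<Sum>i<n. \<Sum>j<n. if i < j then real_of_int (s ! i * s ! j) else 0)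
         = ((real_of_int (sum_list s))^2 - real n) / 2"
proof -
  define a where "a = (\<lambda>i. real_of_int (s ! i))"
  have len: "length s = n" and st: "set s \<subseteq> {-1,1}" using assms by (auto simp: cw_configs_def)
  have sq: "a i * a i = 1" if "i < n" for i
  proof -
    have "s ! i \<in> {-1,1}" using st that len nth_mem by blast
    thus ?thesis unfolding a_def by auto
  qed
  define D where "D = (\<Sum>i<n. \<Sum>j<n. if i < j then a i * a j else 0)"
  have sl: "real_of_int (sum_list s) = (\<Sum>i<n. a i)"
    unfolding a_def sum_list_sum_nth len by (simp add: atLeast0LessThan)
  have "(\<Sum>i<n. a i)^2 = (\<Sum>i<n. \<Sum>j<n. a i * a j)"
    by (simp add: power2_eq_square sum_product)
  also have "\<dots> = (\<Sum>i<n. \<Sum>j<n. (if i < j then a i * a j else 0) + (if j < i then a i * a j else 0)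
                    + (if i = j then a i * a j else 0))"
    by (intro sum.cong refl) auto
  also have "\<dots> = D + (\<Sum>i<n. \<Sum>j<n. if j < i then a i * a j else 0) + (\<Sum>i<n. \<Sum>j<n. if i = j then a i * a j else 0)"
    unfolding D_def by (simp add: sum.distrib)
  also have "(\<Sum>i<n. \<Sum>j<n. if j < i then a i * a j else 0) = D"
    unfolding D_def by (subst sum.swap, intro sum.cong refl) (simp add: mult.commute)
  also have "(\<Sum>i<n. \<Sum>j<n. if i = j then a i * a j else 0) = real n"
    using sq by (simp add: if_distrib sum.delta)
  finally have "(\<Sum>i<n. a i)^2 = 2 * D + real n" by simp
  moreover have "(\<Sum>i<n. \<Sum>j<n. if i < j then real_of_int (s ! i * s ! j) else 0) = D"
    unfolding D_def a_def by (intro sum.cong refl) (simp add: of_int_mult)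
  ultimately show ?thesis unfolding sl by simp
qed

lemma cw_weight_eq_energy:
  assumes "s \<in> cw_configs n"
  shows "cw_weight \<beta> h n s = exp (cw_energy \<beta> h n (real (cw_ones s)))"
proof -
  have len: "length s = n" and st: "set s \<subseteq> {-1,1}" using assms by (auto simp: cw_configs_def)
  have W: "real_of_int (sum_list s) = 2 * real (cw_ones s) - real n"
    using sum_list_pm_one[OF st] len by simp
  have S: "(\<Sum>i<n. real_of_int (s ! i)) = real_of_int (sum_list s)"
    unfolding sum_list_sum_nth len by (simp add: atLeast0LessThan)
  show ?thesis unfolding cw_weight_def cw_energy_def cw_pair_sum[OF assms] S W ..
qed

lemma cw_delta_eq_mod: "cw_delta n = int (n mod 2)"
  unfolding cw_delta_def by (cases "even n") (auto simp: odd_iff_mod_2_eq_one)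

lemma cw_half_index:
  assumes "s \<in> cw_configs n"
  shows "(cw_W s + cw_delta n) div 2 = int (cw_ones s) - int (n div 2)"
proof -
  have len: "length s = n" and st: "set s \<subseteq> {-1,1}" using assms by (auto simp: cw_configs_def)
  have "cw_W s + cw_delta n = 2 * (int (cw_ones s) - int (n div 2))"
    unfolding cw_W_def cw_delta_eq_mod sum_list_pm_one[OF st] len by presburger
  thus ?thesis by simp
qed

lemma card_cw_configs_ones:
  "card {s \<in> cw_configs n. cw_ones s = j} = n choose j"
proof -
  define F where "F = (\<lambda>s::int list. {i. i < n \<and> s ! i = 1})"
  define G where "G = (\<lambda>A. map (\<lambda>i. if i \<in> A then (1::int) else -1) [0..<n])"
  have "bij_betw F {s \<in> cw_configs n. cw_ones s = j} {A. A \<subseteq> {..<n} \<and> card A = j}"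
  proof (rule bij_betw_byWitness[where f'=G])
    show "\<forall>s\<in>{s \<in> cw_configs n. cw_ones s = j}. G (F s) = s"
    proof
      fix s assume s: "s \<in> {s \<in> cw_configs n. cw_ones s = j}"
      hence len: "length s = n" and st: "set s \<subseteq> {-1,1}" by (auto simp: cw_configs_def)
      show "G (F s) = s"
      proof (rule nth_equalityI)
        show "length (G (F s)) = length s" using len by (simp add: G_def)
        fix i assume "i < length (G (F s))"
        hence i: "i < n" by (simp add: G_def)
        have "s ! i \<in> {-1,1}" using st i len nth_mem by blast
        thus "G (F s) ! i = s ! i" using i by (auto simp: G_def F_def)
      qed
    qed
    show "\<forall>A\<in>{A. A \<subseteq> {..<n} \<and> card A = j}. F (G A) = A"
      by (auto simp: F_def G_def split: if_splits)
    show "F ` {s \<in> cw_configs n. cw_ones s = j} \<subseteq> {A. A \<subseteq> {..<n} \<and> card A = j}"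
    proof safe
      fix s assume "s \<in> cw_configs n" "j = cw_ones s"
      hence len: "length s = n" by (auto simp: cw_configs_def)
      show "card (F s) = cw_ones s" unfolding F_def cw_ones_def length_filter_conv_card len ..
    qed (auto simp: F_def)
    show "G ` {A. A \<subseteq> {..<n} \<and> card A = j} \<subseteq> {s \<in> cw_configs n. cw_ones s = j}"
    proof safe
      fix A assume A: "A \<subseteq> {..<n}" "j = card A"
      show "G A \<in> cw_configs n" by (auto simp: G_def cw_configs_def)
      have "cw_ones (G A) = card {i. i < n \<and> (G A) ! i = 1}"
        unfolding cw_ones_def length_filter_conv_card by (simp add: G_def)
      also have "{i. i < n \<and> (G A) ! i = 1} = A" using A by (auto simp: G_def split: if_splits)
      finally show "cw_ones (G A) = card A" .
    qed
  qed
  hence "card {s \<in> cw_configs n. cw_ones s = j} = card {A. A \<subseteq> {..<n} \<and> card A = j}"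
    by (rule bij_betw_same_card)
  also have "\<dots> = n choose j" using n_subsets[of "{..<n}" j] by simp
  finally show ?thesis .
qed

lemma finite_cw_configs: "finite (cw_configs n)"
proof -
  have "cw_configs n \<subseteq> {xs. set xs \<subseteq> {-1,1} \<and> length xs = n}" by (auto simp: cw_configs_def)
  moreover have "finite {xs. set xs \<subseteq> ({-1,1}::int set) \<and> length xs = n}"
    by (rule finite_lists_length_eq) simp
  ultimately show ?thesis by (rule finite_subset)
qed

lemma cw_Z_pos: "cw_Z \<beta> h n > 0"
proof -
  have "replicate n 1 \<in> cw_configs n" by (auto simp: cw_configs_def)
  hence "cw_configs n \<noteq> {}" by blast
  thus ?thesis unfolding cw_Z_def cw_weight_def
    by (intro sum_pos finite_cw_configs) auto
qed

lemma cw_pmf_eq_mass: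
  "cw_pmf \<beta> h n k = cw_mass \<beta> h n (k + int (n div 2)) / cw_Z \<beta> h n"
proof -
  define j where "j = k + int (n div 2)"
  have set_eq: "{s \<in> cw_configs n. (cw_W s + cw_delta n) div 2 = k} = {s \<in> cw_configs n. int (cw_ones s) = j}"
    using cw_half_index unfolding j_def by auto
  have "(\<Sum>s\<in>{s \<in> cw_configs n. int (cw_ones s) = j}. cw_weight \<beta> h n s) = cw_mass \<beta> h n j"
  proof (cases "0 \<le> j")
    case True
    have e: "{s \<in> cw_configs n. int (cw_ones s) = j} = {s \<in> cw_configs n. cw_ones s = nat j}" using True by auto
    have "(\<Sum>s\<in>{s \<in> cw_configs n. cw_ones s = nat j}. cw_weight \<beta> h n s)
          = (\<Sum>s\<in>{s \<in> cw_configs n. cw_ones s = nat j}. exp (cw_energy \<beta> h n (real_of_int j)))"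
      by (intro sum.cong refl) (use True in \<open>auto simp: cw_weight_eq_energy\<close>)
    also have "\<dots> = real (n choose nat j) * exp (cw_energy \<beta> h n (real_of_int j))"
      by (simp add: card_cw_configs_ones)
    finally show ?thesis unfolding e cw_mass_def using True by simp
  next
    case False
    hence "{s \<in> cw_configs n. int (cw_ones s) = j} = {}" by auto
    thus ?thesis using False unfolding cw_mass_def by simp
  qed
  thus ?thesis unfolding cw_pmf_def set_eq j_def by simp
qed

lemma cw_mass_nonneg: "cw_mass \<beta> h n j \<ge> 0"
  unfolding cw_mass_def by auto

lemma cw_pmf_nonneg: "cw_pmf \<beta> h n k \<ge> 0"
  unfolding cw_pmf_eq_mass using cw_mass_nonneg[of \<beta> h n] cw_Z_pos[of \<beta> h n] by simp

lemma cw_mass_pos: "0 \<le> j \<Longrightarrow> j \<le> int n \<Longrightarrow> cw_mass \<beta> h n j > 0"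
  unfolding cw_mass_def by auto

lemma cw_mass_eq_0: "j < 0 \<or> j > int n \<Longrightarrow> cw_mass \<beta> h n j = 0"
  unfolding cw_mass_def by auto

lemma has_sum_cw_pmf: "(cw_pmf \<beta> h n has_sum 1) UNIV"
proof -
  define f where "f = (\<lambda>s. (cw_W s + cw_delta n) div 2)"
  define K where "K = f ` cw_configs n"
  have finK: "finite K" unfolding K_def using finite_cw_configs by simp
  have "(\<Sum>k\<in>K. cw_pmf \<beta> h n k) = (\<Sum>k\<in>K. \<Sum>s\<in>{s \<in> cw_configs n. f s = k}. cw_weight \<beta> h n s) / cw_Z \<beta> h n"
    unfolding cw_pmf_def f_def by (simp add: sum_divide_distrib)
  also have "(\<Sum>k\<in>K. \<Sum>s\<in>{s \<in> cw_configs n. f s = k}. cw_weight \<beta> h n s) = cw_Z \<beta> h n"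
    unfolding cw_Z_def K_def using finite_cw_configs
    by (subst sum.image_gen[symmetric]) auto
  finally have s1: "(\<Sum>k\<in>K. cw_pmf \<beta> h n k) = 1" using cw_Z_pos[of \<beta> h n] by simp
  show ?thesis
  proof (rule has_sum_finite_neutralI[OF finK])
    fix x assume "x \<in> UNIV - K"
    hence "{s \<in> cw_configs n. (cw_W s + cw_delta n) div 2 = x} = {}"
      unfolding K_def f_def by auto
    thus "cw_pmf \<beta> h n x = 0" unfolding cw_pmf_def by (subst \<open>{s \<in> cw_configs n. (cw_W s + cw_delta n) div 2 = x} = {}\<close>) simp
  qed (use s1 in auto)
qed

lemma cw_mass_succ:
  assumes "0 \<le> j" "j < int n"
  shows "cw_mass \<beta> h n (j+1) = cw_mass \<beta> h n j * (real_of_int (int n - j) / real_of_int (j + 1))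
           * exp (2 * \<beta> * (2 * real_of_int j + 1 - real n) / real n + 2 * h)"
proof -
  define m where "m = nat j"
  have jm: "j = int m" using assms unfolding m_def by simp
  have mn: "m < n" using assms jm by simp
  have bin: "real (n choose Suc m) * real (Suc m) = real (n choose m) * real (n - m)"
  proof -
    obtain n' where n': "n = Suc n'" using mn by (cases n) auto
    have "Suc m * (Suc n' choose Suc m) = Suc n' * (n' choose m)" by (rule Suc_times_binomial)
    also have "Suc n' * (n' choose m) = (Suc n' - m) * (Suc n' choose m)"
      using binomial_absorb_comp[of "Suc n'" m] by simp
    finally have "(n choose Suc m) * Suc m = (n choose m) * (n - m)" using n' by (simp add: mult.commute)
    thus ?thesis by (metis of_nat_mult)
  qed
  have G: "cw_energy \<beta> h n (real m + 1) = cw_energy \<beta> h n (real m) + (2 * \<beta> * (2 * real m + 1 - real n) / real n + 2 * h)"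
    using mn unfolding cw_energy_def by (simp add: power2_eq_square field_simps)
  have e1: "int m + 1 = int (Suc m)" by simp
  have L: "cw_mass \<beta> h n (j+1) = real (n choose Suc m) * exp (cw_energy \<beta> h n (real m + 1))"
    unfolding cw_mass_def jm e1 nat_int by (simp add: add.commute)
  have R: "cw_mass \<beta> h n j = real (n choose m) * exp (cw_energy \<beta> h n (real m))"
    unfolding cw_mass_def jm by simp
  have b2: "real (n choose Suc m) = real (n choose m) * (real n - real m) / (real m + 1)"
    using bin mn by (simp add: field_simps of_nat_diff)
  have r1: "real_of_int (int n - j) = real n - real m" "real_of_int (j + 1) = real m + 1" using jm by auto
  show ?thesis unfolding L R b2 G exp_add r1 using jm by (simp add: field_simps)
qed

section \<open>Translated Poisson laws\<close>

definition tp_base :: "real \<Rightarrow> real \<Rightarrow> int" where "tp_base \<mu> s2 = \<lfloor>\<mu> - s2\<rfloor>"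
definition tp_rate :: "real \<Rightarrow> real \<Rightarrow> real" where "tp_rate \<mu> s2 = s2 + (\<mu> - s2 - real_of_int (tp_base \<mu> s2))"

lemma tp_pmf_eq:
  "tp_pmf \<mu> s2 k = (if tp_base \<mu> s2 \<le> k then exp (- tp_rate \<mu> s2) * tp_rate \<mu> s2 ^ nat (k - tp_base \<mu> s2)
      / fact (nat (k - tp_base \<mu> s2)) else 0)"
  unfolding tp_pmf_def tp_base_def tp_rate_def Let_def by simp

lemma tp_base_add_rate: "real_of_int (tp_base \<mu> s2) + tp_rate \<mu> s2 = \<mu>"
  unfolding tp_rate_def by simp

lemma tp_rate_bounds: "s2 \<le> tp_rate \<mu> s2" "tp_rate \<mu> s2 < s2 + 1"
  unfolding tp_rate_def tp_base_def by linarith+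

lemma tp_pmf_nonneg: "s2 > 0 \<Longrightarrow> tp_pmf \<mu> s2 k \<ge> 0"
  using tp_rate_bounds[of s2 \<mu>] unfolding tp_pmf_eq by auto

lemma tp_pmf_pos: "s2 > 0 \<Longrightarrow> tp_base \<mu> s2 \<le> k \<Longrightarrow> tp_pmf \<mu> s2 k > 0"
  using tp_rate_bounds[of s2 \<mu>] unfolding tp_pmf_eq by auto

lemma tp_pmf_succ:
  assumes "s2 > 0" "tp_base \<mu> s2 \<le> k"
  shows "tp_pmf \<mu> s2 (k+1) = tp_pmf \<mu> s2 k * (tp_rate \<mu> s2 / real_of_int (k - tp_base \<mu> s2 + 1))"
proof -
  define m where "m = nat (k - tp_base \<mu> s2)"
  have m1: "nat (k + 1 - tp_base \<mu> s2) = Suc m" unfolding m_def using assms by simp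
  have m2: "real_of_int (k - tp_base \<mu> s2 + 1) = real (Suc m)" unfolding m_def using assms by simp
  show ?thesis unfolding tp_pmf_eq using assms m1 m2
    by (simp add: m_def[symmetric] field_simps)
qed

lemma has_sum_tp_pmf:
  assumes "s2 > 0"
  shows "(tp_pmf \<mu> s2 has_sum 1) UNIV"
proof -
  define a where "a = tp_base \<mu> s2"
  define l where "l = tp_rate \<mu> s2"
  have l0: "l > 0" using tp_rate_bounds[of s2 \<mu>] assms unfolding l_def by simp
  have "(\<lambda>n. l ^ n /\<^sub>R fact n) sums exp l" by (rule exp_converges)
  hence "(\<lambda>n. exp (-l) * (l ^ n / fact n)) sums (exp (-l) * exp l)"
    by (intro sums_mult) (simp add: divide_inverse_commute scaleR_conv_of_real)
  hence "(\<lambda>n. exp (-l) * (l ^ n / fact n)) sums 1" by (simp add: exp_minus exp_not_eq_zero)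
  hence hs: "((\<lambda>n. exp (-l) * (l ^ n / fact n)) has_sum 1) UNIV"
    by (rule sums_nonneg_imp_has_sum) (use l0 in simp)
  have inj: "inj_on (\<lambda>n::nat. a + int n) UNIV" by (auto simp: inj_on_def)
  have img: "(\<lambda>n::nat. a + int n) ` UNIV = {a..}"
  proof (rule set_eqI)
    fix x show "x \<in> range (\<lambda>n. a + int n) \<longleftrightarrow> x \<in> {a..}"
    proof
      assume "x \<in> {a..}" thus "x \<in> range (\<lambda>n. a + int n)"
        by (intro image_eqI[where x="nat (x - a)"]) auto
    qed auto
  qed
  have "(tp_pmf \<mu> s2 has_sum 1) {a..}"
  proof -
    have "((tp_pmf \<mu> s2 \<circ> (\<lambda>n::nat. a + int n)) has_sum 1) UNIV"
      using hs by (rule has_sum_cong[THEN iffD1, rotated])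
        (simp add: tp_pmf_eq a_def[symmetric] l_def[symmetric])
    thus ?thesis using has_sum_reindex[OF inj] img by metis
  qed
  thus ?thesis
    by (rule has_sum_cong_neutral[THEN iffD1, rotated -1]) (auto simp: tp_pmf_eq a_def)
qed

section \<open>Asymptotic bookkeeping\<close>

lemma uniform_bound_of_eventually_bound:
  fixes a :: "nat \<Rightarrow> real" and e :: real
  assumes ev: "eventually (\<lambda>n. a n \<le> C * real n powr e) sequentially"
    and le1: "\<And>n. n \<ge> 1 \<Longrightarrow> a n \<le> 1" and e: "e \<le> 0"
  shows "\<exists>C'. \<forall>n \<ge> 1. a n \<le> C' * real n powr e"
proof -
  obtain N where N: "\<And>n. n \<ge> N \<Longrightarrow> a n \<le> C * real n powr e"
    using ev unfolding eventually_sequentially by blast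
  have "a n \<le> max C (real N powr (- e)) * real n powr e" if "n \<ge> 1" for n
  proof (cases "n \<ge> N")
    case True
    show ?thesis using order_trans[OF N[OF True] mult_right_mono[OF max.cobounded1 powr_ge_zero]] .
  next
    case False
    have "1 \<le> (real N / real n) powr (- e)" using False that e by (intro ge_one_powr_ge_zero) auto
    also have "\<dots> = real N powr (- e) / real n powr (- e)" by (simp add: powr_divide)
    also have "\<dots> = real N powr (- e) * real n powr e" by (simp add: powr_minus divide_inverse)
    also have "\<dots> \<le> max C (real N powr (- e)) * real n powr e" by (intro mult_right_mono) auto
    finally show ?thesis using le1[OF that] by linarith
  qed
  then show ?thesis by blast
qed

text \<open>\<open>log_err\<close> bounds the oscillation of \<open>ln P - ln Q\<close> over \<open>2T\<close> consecutive steps, each of size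
  at most \<open>a / n + b (T + 3)^2 / n^2\<close>; \<open>tail_err\<close> bounds the mass at distance more than \<open>T\<close> from
  the centre of a law whose consecutive ratios are below \<open>exp (- tail_rate c n T)\<close> beyond \<open>T / 2\<close>.\<close>

definition log_err :: "real \<Rightarrow> real \<Rightarrow> nat \<Rightarrow> real \<Rightarrow> real" where
  "log_err a b n T = 2 * T * (a / real n + b * (T + 3)^2 / (real n)^2)"

definition tail_rate :: "real \<Rightarrow> nat \<Rightarrow> real \<Rightarrow> real" where
  "tail_rate c n T = c * T / (8 * real n)"

definition tail_err :: "real \<Rightarrow> nat \<Rightarrow> real \<Rightarrow> real" where
  "tail_err c n T = exp (- tail_rate c n T * (T / 2 - 2)) * (2 / tail_rate c n T)"

lemma eventually_le_mult_one_minus: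
  fixes b :: real
  assumes "b < 1"
  shows "eventually (\<lambda>n::nat. b \<le> real n * (1 - b)) sequentially"
  using assms by real_asymp

lemma window_width_asymptotics:
  fixes a b c :: real
  assumes "c > 0"
  shows "eventually (\<lambda>n::nat. real n powr (5/9) \<ge> 4) sequentially"
    "eventually (\<lambda>n::nat. real n powr (5/9) + 3 \<le> real n * c / 2) sequentially"
    "eventually (\<lambda>n::nat. a + c / 2 + b * (real n powr (5/9) + 3)^2 / real n
       \<le> 3 * c * real n powr (5/9) / 8) sequentially"
  using assms by real_asymp+

lemma log_err_tail_err_asymptotics:
  fixes a b c :: real
  assumes "a > 0" "b > 0" "c > 0"
  shows "eventually (\<lambda>n. log_err a b n (real n powr (5/9)) \<le> 1/4) sequentially"
    "eventually (\<lambda>n. tail_err c n (real n powr (5/9)) \<le> 1/4) sequentially"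
    "eventually (\<lambda>n. 32 * sqrt (2 * c) * (log_err a b n (real n powr (5/9)) + 2 * tail_err c n (real n powr (5/9)))
       / sqrt (real n) + tail_err c n (real n powr (5/9)) \<le> real n powr (-3/4)) sequentially"
    "eventually (\<lambda>n. 4 * log_err a b n (real n powr (5/9)) + 10 * tail_err c n (real n powr (5/9))
       \<le> (9 * b + 1) * real n powr (-1/3)) sequentially"
  unfolding log_err_def tail_err_def tail_rate_def using assms by real_asymp+

section \<open>Consecutive ratios of the two laws\<close>

lemma abs_diff_le_of_increments:
  fixes g :: "int \<Rightarrow> real"
  assumes "\<And>i. a \<le> i \<Longrightarrow> i < a + int t \<Longrightarrow> \<bar>g (i + 1) - g i\<bar> \<le> e"
  shows "\<bar>g (a + int t) - g a\<bar> \<le> real t * e"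
  using assms
proof (induction t)
  case (Suc t)
  have "\<bar>g (a + int t + 1) - g (a + int t)\<bar> \<le> e" using Suc.prems[of "a + int t"] by simp
  moreover have "\<bar>g (a + int t) - g a\<bar> \<le> real t * e" using Suc by simp
  moreover have "a + int (Suc t) = a + int t + 1" by simp
  ultimately show ?case by (simp add: algebra_simps)
qed simp

lemma ln_ratio_binomial_approx:
  fixes N p z U :: real
  assumes N: "N > 0" and p: "0 < p" "p < 1"
    and z: "\<bar>z\<bar> \<le> U" "\<bar>z + 1\<bar> \<le> U" and U: "U \<le> N * p / 2" "U \<le> N * (1 - p) / 2"
  shows "N - (N * p + z) > 0" "N * p + z + 1 > 0"
    "\<bar>ln (N - (N * p + z)) - ln (N * p + z + 1) - (ln (1 - p) - ln p) + (z / (N * (1 - p)) + (z + 1) / (N * p))\<bar>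
       \<le> (2 / (1 - p)^2 + 2 / p^2) * U^2 / N^2"
proof -
  define x1 where "x1 = z / (N * (1 - p))"
  define x2 where "x2 = (z + 1) / (N * p)"
  have Np: "N * p > 0" "N * (1 - p) > 0" using N p by auto
  have ax: "\<bar>x1\<bar> \<le> U / (N * (1 - p))" "\<bar>x2\<bar> \<le> U / (N * p)"
    unfolding x1_def x2_def using z Np by (simp_all add: abs_divide divide_right_mono)
  moreover have "U / (N * (1 - p)) \<le> 1/2" "U / (N * p) \<le> 1/2" using U Np by (simp_all add: field_simps)
  ultimately have small: "\<bar>- x1\<bar> \<le> 1/2" "\<bar>x2\<bar> \<le> 1/2" by linarith+
  have "N * (1 - p) * x1 = z" "N * p * x2 = z + 1" unfolding x1_def x2_def using N p by auto
  then have left: "N - (N * p + z) = N * (1 - p) * (1 + - x1)"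
    and right: "N * p + z + 1 = N * p * (1 + x2)" by (simp_all add: algebra_simps)
  have pos: "1 + - x1 > 0" "1 + x2 > 0" using small by auto
  show "N - (N * p + z) > 0" "N * p + z + 1 > 0" unfolding left right using Np pos by simp_all
  have "ln (N - (N * p + z)) - ln (N * p + z + 1) - (ln (1 - p) - ln p) + (z / (N * (1 - p)) + (z + 1) / (N * p))
      = (ln (1 + - x1) - (- x1)) - (ln (1 + x2) - x2)"
    unfolding left right x1_def[symmetric] x2_def[symmetric] using N p pos by (simp add: ln_mult)
  also have "\<bar>\<dots>\<bar> \<le> 2 * (- x1)^2 + 2 * x2^2"
    using abs_ln_one_plus_x_minus_x_bound[OF small(1)] abs_ln_one_plus_x_minus_x_bound[OF small(2)] by linarith
  also have "\<dots> \<le> 2 * (U / (N * (1 - p)))^2 + 2 * (U / (N * p))^2"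
    using power_mono[OF ax(1) abs_ge_zero, of 2] power_mono[OF ax(2) abs_ge_zero, of 2] by simp
  also have "\<dots> = 2 * (U^2 / N^2 * (1 / (1 - p)^2)) + 2 * (U^2 / N^2 * (1 / p^2))"
    by (simp add: power_divide power_mult_distrib)
  also have "\<dots> = (2 / (1 - p)^2 + 2 / p^2) * U^2 / N^2" by (simp add: algebra_simps add_divide_distrib)
  finally show "\<bar>ln (N - (N * p + z)) - ln (N * p + z + 1) - (ln (1 - p) - ln p) + (z / (N * (1 - p)) + (z + 1) / (N * p))\<bar>
       \<le> (2 / (1 - p)^2 + 2 / p^2) * U^2 / N^2" .
qed

locale curie_weiss =
  fixes \<beta> h m0 :: real
  assumes beta0: "0 < \<beta>" and beta1: "\<beta> < 1" and mfix: "m0 = tanh (\<beta> * m0 + h)"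
begin

text \<open>\<open>p0\<close> is the limiting fraction of spins up, \<open>s2 n = n / \<kappa>\<close> the variance of the approximating
  translated Poisson law, and \<open>K1\<close>, \<open>K2\<close> collect the constants of the second-order expansions below.
  \<open>log_ratio n j\<close> is \<open>ln (P n (k + 1) / P n k)\<close> when \<open>k\<close> has \<open>j\<close> spins up.\<close>
definition "v = 1 - m0^2"
definition "\<kappa> = 4 * (1 - \<beta> * v) / v"
definition "p0 = (1 + m0) / 2"
definition "K1 = 2 * \<kappa> + 2 + 1 / p0"
definition "K2 = 3 * \<kappa>^2 + 2 / (1 - p0)^2 + 2 / p0^2"
definition "\<mu> n = real n * m0 / 2"
definition "s2 n = real n * (1 - m0\<^sup>2) / (4 * (1 - \<beta> + \<beta> * m0\<^sup>2))"
definition "log_ratio n (j::real) = ln (real n - j) - ln (j + 1) + 2 * \<beta> * (2 * j + 1 - real n) / real n + 2 * h"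
definition "parity_shift n = real (n div 2) - real n / 2"

lemma m0_bounds: "-1 < m0" "m0 < 1"
  using mfix tanh_real_lt_1 tanh_real_gt_neg1 by metis+

lemma v_bounds: "0 < v" "v \<le> 1"
proof -
  have "m0^2 < 1" using m0_bounds by (simp add: abs_square_less_1)
  thus "0 < v" "v \<le> 1" unfolding v_def by auto
qed

lemma kappa_pos: "\<kappa> > 0"
proof -
  have "\<beta> * v \<le> \<beta> * 1" using v_bounds beta0 by (intro mult_left_mono) auto
  hence "\<beta> * v < 1" using beta1 by simp
  thus ?thesis unfolding \<kappa>_def using v_bounds by simp
qed

lemma p0_bounds: "0 < p0" "p0 < 1"
  unfolding p0_def using m0_bounds by auto

lemma K_pos: "K1 > 0" "K2 > 0"
  unfolding K1_def K2_def using kappa_pos p0_bounds by (auto intro!: add_pos_nonneg add_nonneg_nonneg)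

lemma K1_ge: "K1 \<ge> 2" "K1 \<ge> 1 / p0"
  unfolding K1_def using kappa_pos p0_bounds by auto

lemma K2_ge: "K2 \<ge> 2 / (1 - p0)^2 + 2 / p0^2"
  unfolding K2_def using kappa_pos by simp

lemma s2_eq: "s2 n = real n / \<kappa>"
proof -
  have "1 - \<beta> + \<beta> * m0\<^sup>2 = 1 - \<beta> * v" unfolding v_def by (simp add: algebra_simps)
  moreover have "1 - \<beta> * v > 0" using kappa_pos v_bounds unfolding \<kappa>_def by (simp add: field_simps)
  ultimately show ?thesis unfolding s2_def \<kappa>_def v_def[symmetric] using v_bounds by (simp add: field_simps)
qed

lemma inverse_p0_sum: "1 / (1 - p0) + 1 / p0 = \<kappa> + 4 * \<beta>"
proof -
  have a: "1 / (1 - p0) + 1 / p0 = 4 / v"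
    unfolding p0_def v_def using m0_bounds by (simp add: field_simps power2_eq_square) 
  moreover have "\<kappa> = 4 / v - 4 * \<beta>" unfolding \<kappa>_def using v_bounds by (simp add: field_simps)
  ultimately show ?thesis by simp
qed

lemma log_odds: "ln (1 - p0) - ln p0 = - 2 * (\<beta> * m0 + h)"
proof -
  define z where "z = \<beta> * m0 + h"
  define e where "e = exp (- 2 * z)"
  have e0: "e > 0" unfolding e_def by simp
  have m: "m0 = (1 - e) / (1 + e)" using mfix tanh_real_altdef unfolding z_def e_def by metis
  have "1 - p0 = e / (1 + e)" unfolding p0_def using m e0 by (simp add: field_simps)
  moreover have "p0 = 1 / (1 + e)" unfolding p0_def using m e0 by (simp add: field_simps)
  ultimately have "ln (1 - p0) - ln p0 = ln e"
    using e0 by (simp add: ln_div)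
  thus ?thesis unfolding e_def z_def by simp
qed

definition "P n k = cw_pmf \<beta> h n k"
definition "Q n k = tp_pmf (\<mu> n) (s2 n) k"
definition "up_spins n k = k + int (n div 2)"
definition "rate n = tp_rate (\<mu> n) (s2 n)"
definition "base n = tp_base (\<mu> n) (s2 n)"

lemma s2_pos: "n \<ge> 1 \<Longrightarrow> s2 n > 0"
  unfolding s2_eq using kappa_pos by simp

lemma rate_bounds: "real n / \<kappa> \<le> rate n" "rate n < real n / \<kappa> + 1"
  unfolding rate_def using tp_rate_bounds(1)[of "s2 n" "\<mu> n"] tp_rate_bounds(2)[of "\<mu> n" "s2 n"] s2_eq by auto

lemma base_add_rate: "real_of_int (base n) + rate n = \<mu> n"
  unfolding base_def rate_def by (rule tp_base_add_rate)

lemma rate_pos: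
  assumes "n \<ge> 1"
  shows "rate n > 0"
proof -
  have "real n / \<kappa> > 0" using assms kappa_pos by simp
  then show ?thesis using rate_bounds(1)[of n] by linarith
qed

lemma inverse_rate_bounds:
  assumes "n \<ge> 1"
  shows "1 / rate n \<le> \<kappa> / real n" "\<kappa> / real n - \<kappa>^2 / (real n)^2 \<le> 1 / rate n"
proof -
  have n: "real n > 0" using assms by simp
  show "1 / rate n \<le> \<kappa> / real n"
    using rate_bounds(1)[of n] rate_pos[OF assms] n kappa_pos by (simp add: field_simps)
  have "\<kappa> / real n - \<kappa>^2 / (real n)^2 = \<kappa> * (real n - \<kappa>) / (real n)^2"
    using n by (simp add: field_simps power2_eq_square)
  also have "\<dots> \<le> \<kappa> / (real n + \<kappa>)"
  proof -
    have "\<kappa> * ((real n - \<kappa>) * (real n + \<kappa>)) \<le> \<kappa> * (real n)^2"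
      using kappa_pos by (intro mult_left_mono) (simp_all add: power2_eq_square algebra_simps)
    then show ?thesis using n kappa_pos by (simp add: field_simps)
  qed
  also have "\<dots> = 1 / (real n / \<kappa> + 1)" using kappa_pos by (simp add: field_simps)
  also have "\<dots> \<le> 1 / rate n" using rate_bounds(2)[of n] rate_pos[OF assms] by (intro divide_left_mono) auto
  finally show "\<kappa> / real n - \<kappa>^2 / (real n)^2 \<le> 1 / rate n" .
qed

lemma tail_exponent_le:
  assumes "n \<ge> 1" "T \<ge> 0" "T + 3 \<le> real n / (2 * \<kappa>)"
  shows "\<kappa> * T / (8 * real n) \<le> T / (4 * rate n)"
proof -
  have "real n / \<kappa> = 2 * (real n / (2 * \<kappa>))" by simp
  then have "rate n \<le> 2 * (real n / \<kappa>)" using rate_bounds(2)[of n] assms(2,3) by linarith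
  then have "T / (4 * (2 * (real n / \<kappa>))) \<le> T / (4 * rate n)"
    using rate_pos[OF assms(1)] assms(1,2) kappa_pos by (intro divide_left_mono) auto
  then show ?thesis using kappa_pos by (simp add: field_simps)
qed

lemma Q_nonneg: "n \<ge> 1 \<Longrightarrow> Q n k \<ge> 0"
  unfolding Q_def using tp_pmf_nonneg[OF s2_pos] by simp

lemma Q_pos:
  assumes "n \<ge> 1" "base n \<le> k"
  shows "Q n k > 0"
  unfolding Q_def using tp_pmf_pos[OF s2_pos[OF assms(1)]] assms(2) unfolding base_def by simp

lemma Q_eq_0: "k < base n \<Longrightarrow> Q n k = 0"
  unfolding Q_def tp_pmf_eq base_def by simp

lemma Q_succ:
  assumes "n \<ge> 1" "base n \<le> k"
  shows "Q n (k + 1) = Q n k * (rate n / real_of_int (k - base n + 1))"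
  unfolding Q_def rate_def base_def using tp_pmf_succ[OF s2_pos[OF assms(1)]] assms(2)
  unfolding base_def by simp

lemma Q_has_sum: "n \<ge> 1 \<Longrightarrow> (Q n has_sum 1) UNIV"
  unfolding Q_def using has_sum_tp_pmf s2_pos by simp

lemma parity_shift_bounds: "-1/2 \<le> parity_shift n" "parity_shift n \<le> 0"
  unfolding parity_shift_def by (cases "even n"; auto elim!: evenE oddE simp: field_simps)+

lemma up_spins_eq: "real_of_int (up_spins n k) = real n * p0 + (real_of_int k - \<mu> n) + parity_shift n"
  unfolding up_spins_def parity_shift_def \<mu>_def p0_def by (simp add: field_simps)

lemma P_succ:
  assumes "0 \<le> up_spins n k" "up_spins n k < int n"
  shows "P n (k+1) = P n k * exp (log_ratio n (real_of_int (up_spins n k)))"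
proof -
  define j where "j = up_spins n k"
  have j1: "up_spins n (k+1) = j + 1" unfolding j_def up_spins_def by simp
  have n0: "real n - real_of_int j > 0" "real_of_int j + 1 > 0" using assms unfolding j_def by auto
  have e: "exp (log_ratio n (real_of_int j)) = real_of_int (int n - j) / real_of_int (j + 1)
           * exp (2 * \<beta> * (2 * real_of_int j + 1 - real n) / real n + 2 * h)"
    unfolding log_ratio_def using n0 by (simp add: exp_add exp_diff)
  show ?thesis unfolding P_def cw_pmf_eq_mass up_spins_def[symmetric] j1 j_def[symmetric]
    using cw_mass_succ[of j n \<beta> h] assms unfolding j_def[symmetric] e by (simp add: ac_simps)
qed

lemma P_pos: "0 \<le> up_spins n k \<Longrightarrow> up_spins n k \<le> int n \<Longrightarrow> P n k > 0"
  unfolding P_def cw_pmf_eq_mass up_spins_def using cw_mass_pos cw_Z_pos by simp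

lemma P_eq_0: "up_spins n k < 0 \<or> up_spins n k > int n \<Longrightarrow> P n k = 0"
  unfolding P_def cw_pmf_eq_mass up_spins_def using cw_mass_eq_0 by simp

lemma P_nonneg: "P n k \<ge> 0"
  unfolding P_def by (rule cw_pmf_nonneg)

lemma log_ratio_approx:
  fixes n :: nat and k :: int and U :: real
  assumes n1: "n \<ge> 1" and U1: "U \<ge> 1" and yU: "\<bar>real_of_int k - \<mu> n\<bar> + 2 \<le> U"
    and Up: "U \<le> real n * p0 / 2" "U \<le> real n * (1 - p0) / 2"
  shows "0 \<le> up_spins n k" "up_spins n k < int n"
    "\<bar>log_ratio n (real_of_int (up_spins n k)) - (- (real_of_int k - \<mu> n + parity_shift n) * \<kappa> / real n + (2 * \<beta> - 1 / p0) / real n)\<bar>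
       \<le> (2 / (1 - p0)^2 + 2 / p0^2) * U^2 / (real n)^2"
proof -
  define z where "z = real_of_int k - \<mu> n + parity_shift n"
  have n: "real n > 0" using n1 by simp
  have j: "real_of_int (up_spins n k) = real n * p0 + z" unfolding z_def using up_spins_eq by simp
  have "\<bar>z\<bar> \<le> U" "\<bar>z + 1\<bar> \<le> U" using yU parity_shift_bounds[of n] unfolding z_def by auto
  note approx = ln_ratio_binomial_approx[OF n p0_bounds this Up]
  have "real_of_int (up_spins n k) > -1" "real_of_int (up_spins n k) < real n" using approx(1,2) j by linarith+
  then show "0 \<le> up_spins n k" "up_spins n k < int n" by simp_all
  have "1 - p0 \<noteq> 0" "p0 \<noteq> 0" using p0_bounds by simp_all
  then have "z / (real n * (1 - p0)) + (z + 1) / (real n * p0) = z * (1 / (1 - p0) + 1 / p0) / real n + 1 / (real n * p0)"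
    using n by (simp add: field_simps)
  then have sum: "z / (real n * (1 - p0)) + (z + 1) / (real n * p0) = z * (\<kappa> + 4 * \<beta>) / real n + 1 / (real n * p0)"
    unfolding inverse_p0_sum .
  have lin: "2 * \<beta> * (2 * (real n * p0 + z) + 1 - real n) / real n = 2 * \<beta> * m0 + (4 * \<beta> * z + 2 * \<beta>) / real n"
    unfolding p0_def using n by (simp add: field_simps)
  have "log_ratio n (real_of_int (up_spins n k)) - (- z * \<kappa> / real n + (2 * \<beta> - 1 / p0) / real n)
      = ln (real n - (real n * p0 + z)) - ln (real n * p0 + z + 1) - (ln (1 - p0) - ln p0)
        + (z / (real n * (1 - p0)) + (z + 1) / (real n * p0))"
    unfolding log_ratio_def j lin sum log_odds using n p0_bounds by (simp add: field_simps)
  with approx(3) show "\<bar>log_ratio n (real_of_int (up_spins n k)) - (- (real_of_int k - \<mu> n + parity_shift n) * \<kappa> / real n + (2 * \<beta> - 1 / p0) / real n)\<bar>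
       \<le> (2 / (1 - p0)^2 + 2 / p0^2) * U^2 / (real n)^2"
    unfolding z_def by simp
qed

lemma ln_Q_succ_approx:
  fixes n :: nat and k :: int and U :: real
  assumes n1: "n \<ge> 1" and U1: "U \<ge> 1" and yU: "\<bar>real_of_int k - \<mu> n\<bar> + 2 \<le> U"
    and Uk: "U \<le> real n / (2 * \<kappa>)"
  shows "base n \<le> k"
    "\<bar>ln (Q n (k+1)) - ln (Q n k) + (real_of_int k - \<mu> n + 1) / rate n\<bar> \<le> 2 * \<kappa>^2 * U^2 / (real n)^2"
proof -
  define x where "x = (real_of_int k - \<mu> n + 1) / rate n"
  have n: "real n > 0" using n1 by simp
  have l0: "rate n > 0" by (rule rate_pos[OF n1])
  have "\<bar>x\<bar> \<le> U / rate n" unfolding x_def using yU l0 by (simp add: abs_divide divide_right_mono)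
  also have "\<dots> \<le> U / (real n / \<kappa>)"
    using U1 rate_bounds(1)[of n] n kappa_pos l0 by (intro divide_left_mono) auto
  finally have ax: "\<bar>x\<bar> \<le> U * \<kappa> / real n" by simp
  moreover have "U * \<kappa> / real n \<le> 1/2" using Uk n kappa_pos by (simp add: field_simps)
  ultimately have small: "\<bar>x\<bar> \<le> 1/2" by linarith
  have denom: "real_of_int (k - base n + 1) = rate n * (1 + x)"
    unfolding x_def base_add_rate[of n, symmetric] using l0 by (simp add: field_simps)
  moreover have "1 + x > 0" using small by auto
  ultimately have pos: "real_of_int (k - base n + 1) > 0" using l0 by simp
  then show ak: "base n \<le> k" by simp
  have "ln (Q n (k+1)) - ln (Q n k) = ln (rate n / real_of_int (k - base n + 1))"
    using ln_mult_pos[OF Q_pos[OF n1 ak] divide_pos_pos[OF l0 pos]] unfolding Q_succ[OF n1 ak] by simp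
  also have "\<dots> = - ln (1 + x)" unfolding denom using l0 \<open>1 + x > 0\<close> by (simp add: ln_div)
  finally have "ln (Q n (k+1)) - ln (Q n k) + (real_of_int k - \<mu> n + 1) / rate n = - (ln (1 + x) - x)"
    unfolding x_def by simp
  moreover have "\<bar>ln (1 + x) - x\<bar> \<le> 2 * x^2" by (rule abs_ln_one_plus_x_minus_x_bound[OF small])
  moreover have "x^2 \<le> (U * \<kappa> / real n)^2" using power_mono[OF ax abs_ge_zero, of 2] by simp
  moreover have "2 * (U * \<kappa> / real n)^2 = 2 * \<kappa>^2 * U^2 / (real n)^2" by (simp add: power_mult_distrib power_divide)
  ultimately show "\<bar>ln (Q n (k+1)) - ln (Q n k) + (real_of_int k - \<mu> n + 1) / rate n\<bar> \<le> 2 * \<kappa>^2 * U^2 / (real n)^2"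
    by simp
qed

lemma increment_constant_terms_le:
  assumes n1: "n \<ge> 1"
  shows "\<bar>1 / rate n - parity_shift n * \<kappa> / real n + (2 * \<beta> - 1 / p0) / real n\<bar> \<le> K1 / real n"
proof -
  have n: "real n > 0" using n1 by simp
  have r: "0 \<le> 1 / rate n" "1 / rate n \<le> \<kappa> / real n" using rate_pos[OF n1] inverse_rate_bounds(1)[OF n1] by auto
  have "\<bar>parity_shift n\<bar> * \<kappa> \<le> 1/2 * \<kappa>"
    using parity_shift_bounds[of n] kappa_pos by (intro mult_right_mono) auto
  then have "\<bar>parity_shift n\<bar> * \<kappa> / real n \<le> 1/2 * \<kappa> / real n" using n by (intro divide_right_mono) auto
  then have d: "\<bar>parity_shift n * \<kappa> / real n\<bar> \<le> \<kappa> / 2 / real n"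
    using n kappa_pos by (simp add: abs_mult abs_divide)
  have "0 < 1 / p0" using p0_bounds by simp
  then have "\<bar>2 * \<beta> - 1 / p0\<bar> \<le> 2 + 1 / p0" unfolding abs_le_iff using beta0 beta1 by linarith
  then have c: "\<bar>(2 * \<beta> - 1 / p0) / real n\<bar> \<le> (2 + 1 / p0) / real n"
    using n by (simp add: abs_divide divide_right_mono)
  have K1: "K1 / real n = \<kappa> / real n + \<kappa> / 2 / real n + (2 + 1 / p0) / real n + \<kappa> / 2 / real n"
    unfolding K1_def using n by (simp add: field_simps)
  have "0 \<le> \<kappa> / 2 / real n" using kappa_pos n by simp
  then show ?thesis
    using r K1 abs_le_D1[OF d] abs_le_D2[OF d] abs_le_D1[OF c] abs_le_D2[OF c] by (intro abs_leI) linarith+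
qed

lemma increment_linear_term_le:
  assumes n1: "n \<ge> 1" and U1: "U \<ge> 1" and y: "\<bar>y\<bar> \<le> U"
  shows "\<bar>y * (1 / rate n - \<kappa> / real n)\<bar> \<le> \<kappa>^2 * U^2 / (real n)^2"
proof -
  have "\<bar>1 / rate n - \<kappa> / real n\<bar> \<le> \<kappa>^2 / (real n)^2" using inverse_rate_bounds[OF n1] by linarith
  then have "\<bar>y * (1 / rate n - \<kappa> / real n)\<bar> \<le> U * (\<kappa>^2 / (real n)^2)"
    unfolding abs_mult by (rule mult_mono[OF y]) (use U1 in auto)
  also have "\<dots> \<le> U^2 * (\<kappa>^2 / (real n)^2)"
    by (rule mult_right_mono) (use U1 in \<open>auto simp: power2_eq_square\<close>)
  finally show ?thesis by (simp add: ac_simps)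
qed

text \<open>The increments of \<open>ln P n\<close> and \<open>ln Q n\<close> agree to first order near \<open>\<mu> n\<close>: both are
  \<open>-(k - \<mu> n) \<kappa> / n\<close> up to \<open>O(1 / n + U^2 / n^2)\<close>.\<close>
lemma ln_P_Q_increment:
  fixes n :: nat and k :: int and U :: real
  assumes n1: "n \<ge> 1" and U1: "U \<ge> 1" and yU: "\<bar>real_of_int k - \<mu> n\<bar> + 2 \<le> U"
    and Up: "U \<le> real n * p0 / 2" "U \<le> real n * (1 - p0) / 2"
    and Uk: "U \<le> real n / (2 * \<kappa>)"
  shows "P n k > 0" "Q n k > 0" "P n (k+1) > 0" "Q n (k+1) > 0"
    "\<bar>(ln (P n (k+1)) - ln (Q n (k+1))) - (ln (P n k) - ln (Q n k))\<bar> \<le> K1 / real n + K2 * U^2 / (real n)^2"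
proof -
  note LA = log_ratio_approx[OF n1 U1 yU Up]
  note QS = ln_Q_succ_approx[OF n1 U1 yU Uk]
  show Pk: "P n k > 0" using P_pos LA(1,2) by simp
  show "Q n k > 0" using Q_pos[OF n1 QS(1)] .
  show "P n (k+1) > 0" using P_pos[of n "k+1"] LA(1,2) unfolding up_spins_def by simp
  show "Q n (k+1) > 0" using Q_pos[OF n1] QS(1) by simp
  define y where "y = real_of_int k - \<mu> n"
  define E1 where "E1 = log_ratio n (real_of_int (up_spins n k)) - (- (y + parity_shift n) * \<kappa> / real n + (2 * \<beta> - 1 / p0) / real n)"
  define E3 where "E3 = ln (Q n (k+1)) - ln (Q n k) + (y + 1) / rate n"
  have n: "real n > 0" using n1 by simp
  have "ln (P n (k+1)) - ln (P n k) = log_ratio n (real_of_int (up_spins n k))"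
    unfolding P_succ[OF LA(1,2)] using Pk by (simp add: ln_mult)
  then have "(ln (P n (k+1)) - ln (Q n (k+1))) - (ln (P n k) - ln (Q n k))
      = (- (y + parity_shift n) * \<kappa> / real n + (2 * \<beta> - 1 / p0) / real n + E1) - (E3 - (y + 1) / rate n)"
    unfolding E1_def E3_def by simp
  also have "\<dots> = y * (1 / rate n - \<kappa> / real n)
      + (1 / rate n - parity_shift n * \<kappa> / real n + (2 * \<beta> - 1 / p0) / real n) + E1 - E3"
    using n rate_pos[OF n1] by (simp add: field_simps)
  finally have D: "(ln (P n (k+1)) - ln (Q n (k+1))) - (ln (P n k) - ln (Q n k))
      = y * (1 / rate n - \<kappa> / real n)
      + (1 / rate n - parity_shift n * \<kappa> / real n + (2 * \<beta> - 1 / p0) / real n) + E1 - E3" .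
  have "\<bar>y\<bar> \<le> U" using yU unfolding y_def by linarith
  note lin = increment_linear_term_le[OF n1 U1 this]
  have E1: "\<bar>E1\<bar> \<le> (2 / (1 - p0)^2 + 2 / p0^2) * U^2 / (real n)^2"
    unfolding E1_def y_def using LA(3) .
  have E3: "\<bar>E3\<bar> \<le> 2 * \<kappa>^2 * U^2 / (real n)^2"
    unfolding E3_def y_def using QS(2) .
  have "K2 * U^2 / (real n)^2 = \<kappa>^2 * U^2 / (real n)^2 + (2 / (1 - p0)^2 + 2 / p0^2) * U^2 / (real n)^2
      + 2 * \<kappa>^2 * U^2 / (real n)^2"
    unfolding K2_def using n by (simp add: field_simps)
  with D lin increment_constant_terms_le[OF n1] E1 E3
  show "\<bar>(ln (P n (k+1)) - ln (Q n (k+1))) - (ln (P n k) - ln (Q n k))\<bar> \<le> K1 / real n + K2 * U^2 / (real n)^2"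
    by (simp only: abs_le_iff) linarith
qed

lemma log_ratio_antimono:
  fixes n :: nat and x x' :: real
  assumes n1: "n \<ge> 1" and nb: "\<beta> \<le> real n * (1 - \<beta>)"
    and x: "0 \<le> x" "x \<le> x'" "x' \<le> real n - 1"
  shows "log_ratio n x' \<le> log_ratio n x"
proof (rule DERIV_nonpos_imp_nonincreasing[OF x(2)])
  fix t assume t: "x \<le> t" "t \<le> x'"
  have nn: "real n > 0" using n1 by simp
  have a: "real n - t > 0" "t + 1 > 0" using t x by auto
  have der: "((\<lambda>j. log_ratio n j) has_real_derivative (- 1 / (real n - t) - 1 / (t + 1) + 4 * \<beta> / real n)) (at t)"
    unfolding log_ratio_def
    by (rule derivative_eq_intros refl | use a nn in simp)+
  have "4 / (real n + 1) \<le> 1 / (real n - t) + 1 / (t + 1)"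
  proof -
    have "4 * ((real n - t) * (t + 1)) \<le> (real n + 1) * (real n + 1)"
    proof -
      have "0 \<le> ((real n - t) - (t + 1))^2" by simp
      thus ?thesis by (simp add: power2_eq_square algebra_simps)
    qed
    hence "4 / (real n + 1) \<le> (real n + 1) / ((real n - t) * (t + 1))"
    proof -
      assume h4: "4 * ((real n - t) * (t + 1)) \<le> (real n + 1) * (real n + 1)"
      define A where "A = (real n - t) * (t + 1)"
      have A0: "A > 0" unfolding A_def using a by simp
      have "(real n + 1) / A - 4 / (real n + 1) = ((real n + 1) * (real n + 1) - 4 * A) / (A * (real n + 1))"
        using A0 nn by (simp add: field_simps)
      also have "\<dots> \<ge> 0" using h4 A0 nn unfolding A_def[symmetric] by (intro divide_nonneg_pos) auto
      finally show ?thesis unfolding A_def by simp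
    qed
    also have "\<dots> = 1 / (real n - t) + 1 / (t + 1)" using a by (simp add: field_simps)
    finally show ?thesis .
  qed
  moreover have "4 * \<beta> / real n \<le> 4 / (real n + 1)" using nb nn by (simp add: field_simps)
  ultimately have "- 1 / (real n - t) - 1 / (t + 1) + 4 * \<beta> / real n \<le> 0" by simp
  thus "\<exists>y. ((\<lambda>j. log_ratio n j) has_real_derivative y) (at t) \<and> y \<le> 0" using der by blast
qed

lemma ln_P_Q_oscillation:
  fixes n :: nat and T U :: real
  assumes n1: "n \<ge> 1" and T0: "T \<ge> 0" and U1: "U \<ge> 1" and TU: "T + 2 \<le> U"
    and Up: "U \<le> real n * p0 / 2" "U \<le> real n * (1 - p0) / 2"
    and Uk: "U \<le> real n / (2 * \<kappa>)"
    and k: "\<bar>real_of_int k - \<mu> n\<bar> \<le> T"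
  shows "P n k > 0" "Q n k > 0"
    "\<bar>ln (P n k) - ln (Q n k) - (ln (P n \<lceil>\<mu> n - T\<rceil>) - ln (Q n \<lceil>\<mu> n - T\<rceil>))\<bar>
       \<le> 2 * T * (K1 / real n + K2 * U^2 / (real n)^2)"
proof -
  define k0 where "k0 = \<lceil>\<mu> n - T\<rceil>"
  define e where "e = K1 / real n + K2 * U^2 / (real n)^2"
  define g where "g = (\<lambda>i. ln (P n i) - ln (Q n i))"
  have incr: "\<bar>g (i + 1) - g i\<bar> \<le> e" "P n i > 0" "Q n i > 0" if "\<bar>real_of_int i - \<mu> n\<bar> \<le> T" for i
  proof -
    have "\<bar>real_of_int i - \<mu> n\<bar> + 2 \<le> U" using that TU by linarith
    note S = ln_P_Q_increment[OF n1 U1 this Up Uk]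
    show "\<bar>g (i + 1) - g i\<bar> \<le> e" unfolding g_def e_def using S(5) by simp
    show "P n i > 0" "Q n i > 0" using S(1,2) by auto
  qed
  show "P n k > 0" "Q n k > 0" using incr(2,3)[OF k] by auto
  define t where "t = nat (k - k0)"
  have kt: "k = k0 + int t" unfolding t_def k0_def using k by linarith
  have "\<bar>g (k0 + int t) - g k0\<bar> \<le> real t * e"
  proof (rule abs_diff_le_of_increments)
    fix i assume i: "k0 \<le> i" "i < k0 + int t"
    have "real_of_int i < real_of_int k" using i(2) kt by simp
    then have "\<bar>real_of_int i - \<mu> n\<bar> \<le> T" using i(1) k unfolding k0_def by linarith
    then show "\<bar>g (i + 1) - g i\<bar> \<le> e" by (rule incr(1))
  qed
  also have "\<dots> \<le> 2 * T * e"
    using k K_pos n1 unfolding t_def k0_def e_def by (intro mult_right_mono) (linarith, simp)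
  finally have "\<bar>g k - g k0\<bar> \<le> 2 * T * e" unfolding kt[symmetric] .
  then show "\<bar>ln (P n k) - ln (Q n k) - (ln (P n \<lceil>\<mu> n - T\<rceil>) - ln (Q n \<lceil>\<mu> n - T\<rceil>))\<bar>
       \<le> 2 * T * (K1 / real n + K2 * U^2 / (real n)^2)"
    unfolding g_def e_def k0_def .
qed

text \<open>At distance \<open>T / 2\<close> from the centre the Curie--Weiss ratio \<open>P n (k + 1) / P n k\<close> is
  already below \<open>exp (- \<kappa> T / (8 n))\<close>; monotonicity of \<open>log_ratio\<close> carries this to the tail.\<close>
lemma log_ratio_upper_edge:
  fixes n :: nat and T :: real
  assumes n1: "n \<ge> 1" and T4: "T \<ge> 4"
    and Up: "T + 3 \<le> real n * p0 / 2" "T + 3 \<le> real n * (1 - p0) / 2"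
    and H5: "K1 + \<kappa> / 2 + K2 * (T + 3)^2 / real n \<le> 3 * \<kappa> * T / 8"
  shows "0 \<le> up_spins n \<lceil>\<mu> n + T / 2\<rceil>"
    "log_ratio n (real_of_int (up_spins n \<lceil>\<mu> n + T / 2\<rceil>)) \<le> - \<kappa> * T / (8 * real n)"
proof -
  define b1 where "b1 = \<lceil>\<mu> n + T / 2\<rceil>"
  have nn: "real n > 0" using n1 by simp
  have kp: "\<kappa> > 0" by (rule kappa_pos)
  define U where "U = T + 3"
  have U1: "U \<ge> 1" using T4 by (simp add: U_def)
  have yb: "T / 2 \<le> real_of_int b1 - \<mu> n" "real_of_int b1 - \<mu> n \<le> T / 2 + 1" unfolding b1_def by linarith+
  have yU: "\<bar>real_of_int b1 - \<mu> n\<bar> + 2 \<le> U" using yb T4 by (auto simp: U_def)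
  note LA = log_ratio_approx[OF n1 U1 yU Up[folded U_def]]
  define X where "X = real_of_int b1 - \<mu> n + parity_shift n"
  define c where "c = 2 / (1 - p0)^2 + 2 / p0^2"
  have X: "X \<ge> T / 2 - 1 / 2" unfolding X_def using yb parity_shift_bounds[of n] by linarith
  have LR1: "log_ratio n (real_of_int (up_spins n b1)) \<le> (- X * \<kappa> + (2 * \<beta> - 1 / p0) + c * U^2 / real n) / real n"
  proof -
    have "log_ratio n (real_of_int (up_spins n b1)) \<le> - X * \<kappa> / real n + (2 * \<beta> - 1 / p0) / real n + c * U^2 / (real n)^2"
      using LA(3) unfolding X_def c_def by linarith
    also have "\<dots> = (- X * \<kappa> + (2 * \<beta> - 1 / p0) + c * U^2 / real n) / real n"
      using nn by (simp add: field_simps power2_eq_square)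
    finally show ?thesis .
  qed
  have num: "- X * \<kappa> + (2 * \<beta> - 1 / p0) + c * U^2 / real n \<le> - (\<kappa> * T / 8)"
  proof -
    have "X * \<kappa> \<ge> (T / 2 - 1 / 2) * \<kappa>" using X kp by (intro mult_right_mono) auto
    hence "X * \<kappa> \<ge> \<kappa> * T / 2 - \<kappa> / 2" by (simp add: algebra_simps)
    moreover have "c * U^2 / real n \<le> K2 * U^2 / real n"
      using K2_ge nn unfolding c_def by (intro divide_right_mono mult_right_mono) auto
    moreover have "2 * \<beta> - 1 / p0 \<le> K1"
    proof -
      have ip: "0 < 1 / p0" using p0_bounds by simp
      thus ?thesis using K1_ge(1) beta1 by linarith
    qed
    moreover have "K1 + \<kappa> / 2 + K2 * U^2 / real n \<le> 3 * (\<kappa> * T) / 8" using H5 by (simp add: U_def mult.assoc)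
    ultimately show ?thesis by linarith
  qed
  have LRb: "log_ratio n (real_of_int (up_spins n b1)) \<le> - \<kappa> * T / (8 * real n)"
  proof -
    have "(- X * \<kappa> + (2 * \<beta> - 1 / p0) + c * U^2 / real n) / real n \<le> - (\<kappa> * T / 8) / real n"
      using num nn by (intro divide_right_mono) auto
    thus ?thesis using LR1 by (simp add: field_simps)
  qed
  show "0 \<le> up_spins n \<lceil>\<mu> n + T / 2\<rceil>" using LA(1) unfolding b1_def .
  show "log_ratio n (real_of_int (up_spins n \<lceil>\<mu> n + T / 2\<rceil>)) \<le> - \<kappa> * T / (8 * real n)"
    using LRb unfolding b1_def .
qed

lemma log_ratio_lower_edge:
  fixes n :: nat and T :: real
  assumes n1: "n \<ge> 1" and T4: "T \<ge> 4"
    and Up: "T + 3 \<le> real n * p0 / 2" "T + 3 \<le> real n * (1 - p0) / 2"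
    and H5: "K1 + \<kappa> / 2 + K2 * (T + 3)^2 / real n \<le> 3 * \<kappa> * T / 8"
  shows "up_spins n (\<lfloor>\<mu> n - T / 2\<rfloor> - 1) < int n"
    "\<kappa> * T / (8 * real n) \<le> log_ratio n (real_of_int (up_spins n (\<lfloor>\<mu> n - T / 2\<rfloor> - 1)))"
proof -
  define b3 where "b3 = \<lfloor>\<mu> n - T / 2\<rfloor> - 1"
  have nn: "real n > 0" using n1 by simp
  have kp: "\<kappa> > 0" by (rule kappa_pos)
  define U where "U = T + 3"
  have U1: "U \<ge> 1" using T4 by (simp add: U_def)
  have yb: "real_of_int b3 - \<mu> n \<le> - T / 2 - 1" "- T / 2 - 2 \<le> real_of_int b3 - \<mu> n" unfolding b3_def by linarith+
  have yU: "\<bar>real_of_int b3 - \<mu> n\<bar> + 2 \<le> U" using yb T4 by (auto simp: U_def)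
  note LA = log_ratio_approx[OF n1 U1 yU Up[folded U_def]]
  define X where "X = - (real_of_int b3 - \<mu> n + parity_shift n)"
  define c where "c = 2 / (1 - p0)^2 + 2 / p0^2"
  have X: "X \<ge> T / 2" unfolding X_def using yb parity_shift_bounds[of n] by linarith
  have LR1: "(X * \<kappa> + (2 * \<beta> - 1 / p0) - c * U^2 / real n) / real n \<le> log_ratio n (real_of_int (up_spins n b3))"
  proof -
    have "(X * \<kappa> + (2 * \<beta> - 1 / p0) - c * U^2 / real n) / real n = X * \<kappa> / real n + (2 * \<beta> - 1 / p0) / real n - c * U^2 / (real n)^2"
      using nn by (simp add: field_simps power2_eq_square)
    also have "\<dots> \<le> log_ratio n (real_of_int (up_spins n b3))"
      using LA(3) unfolding X_def c_def by (simp add: abs_le_iff)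
    finally show ?thesis .
  qed
  have num: "\<kappa> * T / 8 \<le> X * \<kappa> + (2 * \<beta> - 1 / p0) - c * U^2 / real n"
  proof -
    have "X * \<kappa> \<ge> T / 2 * \<kappa>" using X kp by (intro mult_right_mono) auto
    hence "X * \<kappa> \<ge> \<kappa> * T / 2" by (simp add: algebra_simps)
    moreover have "c * U^2 / real n \<le> K2 * U^2 / real n"
      using K2_ge nn unfolding c_def by (intro divide_right_mono mult_right_mono) auto
    moreover have "- K1 \<le> 2 * \<beta> - 1 / p0" using K1_ge(2) beta0 by linarith
    moreover have "K1 + \<kappa> / 2 + K2 * U^2 / real n \<le> 3 * (\<kappa> * T) / 8" using H5 by (simp add: U_def mult.assoc)
    moreover have "0 \<le> \<kappa> / 2" using kp by simp
    ultimately show ?thesis by linarith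
  qed
  have LRb: "\<kappa> * T / (8 * real n) \<le> log_ratio n (real_of_int (up_spins n b3))"
  proof -
    have "(\<kappa> * T / 8) / real n \<le> (X * \<kappa> + (2 * \<beta> - 1 / p0) - c * U^2 / real n) / real n"
      using num nn by (intro divide_right_mono) auto
    thus ?thesis using LR1 by (simp add: field_simps)
  qed
  show "up_spins n (\<lfloor>\<mu> n - T / 2\<rfloor> - 1) < int n" using LA(2) unfolding b3_def .
  show "\<kappa> * T / (8 * real n) \<le> log_ratio n (real_of_int (up_spins n (\<lfloor>\<mu> n - T / 2\<rfloor> - 1)))"
    using LRb unfolding b3_def .
qed

lemma P_succ_le_tail:
  fixes n :: nat and T :: real
  assumes n1: "n \<ge> 1" and T4: "T \<ge> 4"
    and Up: "T + 3 \<le> real n * p0 / 2" "T + 3 \<le> real n * (1 - p0) / 2"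
    and H5: "K1 + \<kappa> / 2 + K2 * (T + 3)^2 / real n \<le> 3 * \<kappa> * T / 8"
    and nb: "\<beta> \<le> real n * (1 - \<beta>)" and k: "k \<ge> \<lceil>\<mu> n + T / 2\<rceil>"
  shows "P n (k+1) \<le> exp (- \<kappa> * T / (8 * real n)) * P n k"
proof (cases "up_spins n k < int n")
  case False
  then have "P n (k+1) = 0" using P_eq_0 unfolding up_spins_def by simp
  then show ?thesis using P_nonneg[of n k] by simp
next
  case True
  note edge = log_ratio_upper_edge[OF n1 T4 Up H5]
  have j0: "0 \<le> up_spins n k" using edge(1) k unfolding up_spins_def by simp
  have "log_ratio n (real_of_int (up_spins n k)) \<le> log_ratio n (real_of_int (up_spins n \<lceil>\<mu> n + T / 2\<rceil>))"
    by (rule log_ratio_antimono[OF n1 nb]) (use edge(1) k True in \<open>auto simp: up_spins_def\<close>)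
  then have "exp (log_ratio n (real_of_int (up_spins n k))) \<le> exp (- \<kappa> * T / (8 * real n))" using edge(2) by simp
  then have "P n k * exp (log_ratio n (real_of_int (up_spins n k))) \<le> P n k * exp (- \<kappa> * T / (8 * real n))"
    by (rule mult_left_mono) (rule P_nonneg)
  then show ?thesis unfolding P_succ[OF j0 True] by (simp add: mult.commute)
qed

lemma P_pred_le_tail:
  fixes n :: nat and T :: real
  assumes n1: "n \<ge> 1" and T4: "T \<ge> 4"
    and Up: "T + 3 \<le> real n * p0 / 2" "T + 3 \<le> real n * (1 - p0) / 2"
    and H5: "K1 + \<kappa> / 2 + K2 * (T + 3)^2 / real n \<le> 3 * \<kappa> * T / 8"
    and nb: "\<beta> \<le> real n * (1 - \<beta>)" and k: "k \<le> \<lfloor>\<mu> n - T / 2\<rfloor>"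
  shows "P n (k - 1) \<le> exp (- \<kappa> * T / (8 * real n)) * P n k"
proof (cases "up_spins n k \<le> 0")
  case True
  then have "P n (k-1) = 0" using P_eq_0 unfolding up_spins_def by simp
  then show ?thesis using P_nonneg[of n k] by simp
next
  case False
  note edge = log_ratio_lower_edge[OF n1 T4 Up H5]
  define i where "i = k - 1"
  have i0: "0 \<le> up_spins n i" using False unfolding i_def up_spins_def by simp
  have ib: "i \<le> \<lfloor>\<mu> n - T / 2\<rfloor> - 1" unfolding i_def using k by simp
  have iln: "up_spins n i < int n" using edge(1) ib unfolding up_spins_def by simp
  have "log_ratio n (real_of_int (up_spins n (\<lfloor>\<mu> n - T / 2\<rfloor> - 1))) \<le> log_ratio n (real_of_int (up_spins n i))"
    by (rule log_ratio_antimono[OF n1 nb]) (use i0 ib edge(1) in \<open>auto simp: up_spins_def\<close>)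
  then have le: "\<kappa> * T / (8 * real n) \<le> log_ratio n (real_of_int (up_spins n i))" using edge(2) by linarith
  have "k = i + 1" unfolding i_def by simp
  then have "P n k = P n i * exp (log_ratio n (real_of_int (up_spins n i)))" using P_succ[OF i0 iln] by simp
  then have "P n i = P n k * exp (- log_ratio n (real_of_int (up_spins n i)))" by (simp add: exp_minus_inverse mult.assoc)
  also have "\<dots> \<le> P n k * exp (- \<kappa> * T / (8 * real n))"
    by (rule mult_left_mono) (use le in simp, rule P_nonneg)
  finally show ?thesis unfolding i_def by (simp add: mult.commute)
qed

lemma Q_succ_le_tail:
  fixes n :: nat and T :: real
  assumes n1: "n \<ge> 1" and T4: "T \<ge> 4" and Uk: "T + 3 \<le> real n / (2 * \<kappa>)"
    and k: "k \<ge> \<lceil>\<mu> n + T / 2\<rceil>"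
  shows "Q n (k+1) \<le> exp (- \<kappa> * T / (8 * real n)) * Q n k"
proof -
  have l0: "rate n > 0" by (rule rate_pos[OF n1])
  have kr: "real_of_int (k - base n + 1) \<ge> rate n + T / 2"
    using k base_add_rate[of n] by simp linarith
  then have ak: "base n \<le> k" using l0 T4 by simp
  have "real n / (2 * \<kappa>) = real n / \<kappa> / 2" by simp
  then have T_le: "2 * T \<le> rate n" using Uk rate_bounds(1)[of n] by linarith
  define x where "x = T / (2 * rate n)"
  have x0: "0 \<le> x" "x \<le> 1" unfolding x_def using l0 T4 T_le by (simp_all add: field_simps)
  have "exp (x / 2) \<le> 1 + 2 * (x / 2)" using real_exp_bound_lemma[of "x / 2"] x0 by simp
  then have exp_le: "exp (x / 2) \<le> 1 + x" by simp
  have "rate n / real_of_int (k - base n + 1) \<le> rate n / (rate n + T / 2)"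
    using kr l0 T4 by (intro divide_left_mono) auto
  also have "\<dots> = 1 / (1 + x)" unfolding x_def using l0 by (simp add: field_simps)
  also have "\<dots> \<le> 1 / exp (x / 2)" using exp_le x0 by (intro divide_left_mono) auto
  also have "\<dots> = exp (- (T / (4 * rate n)))" unfolding x_def by (simp add: exp_minus inverse_eq_divide)
  also have "\<dots> \<le> exp (- \<kappa> * T / (8 * real n))" using tail_exponent_le[OF n1 _ Uk] T4 by simp
  finally have ratio: "rate n / real_of_int (k - base n + 1) \<le> exp (- \<kappa> * T / (8 * real n))" .
  have "Q n (k + 1) \<le> Q n k * exp (- \<kappa> * T / (8 * real n))"
    unfolding Q_succ[OF n1 ak] by (rule mult_left_mono[OF ratio Q_nonneg[OF n1]])
  then show ?thesis by (simp only: mult.commute[of "exp (- \<kappa> * T / (8 * real n))"])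
qed

lemma Q_pred_le_tail:
  fixes n :: nat and T :: real
  assumes n1: "n \<ge> 1" and T4: "T \<ge> 4" and Uk: "T + 3 \<le> real n / (2 * \<kappa>)"
    and k: "k \<le> \<lfloor>\<mu> n - T / 2\<rfloor>"
  shows "Q n (k - 1) \<le> exp (- \<kappa> * T / (8 * real n)) * Q n k"
proof (cases "k - 1 < base n")
  case True
  then show ?thesis using Q_eq_0 Q_nonneg[OF n1, of k] by simp
next
  case False
  have l0: "rate n > 0" by (rule rate_pos[OF n1])
  have Q_eq: "Q n (k - 1) = Q n k * (real_of_int (k - base n) / rate n)"
    using Q_succ[OF n1, of "k - 1"] False l0 by (simp add: field_simps)
  have "real_of_int (k - base n) / rate n \<le> (rate n - T / 2) / rate n"
    using k base_add_rate[of n] l0 by (intro divide_right_mono) linarith+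
  also have "\<dots> = 1 - T / (2 * rate n)" using l0 by (simp add: field_simps)
  also have "\<dots> \<le> exp (- (T / (2 * rate n)))" using exp_ge_add_one_self[of "- (T / (2 * rate n))"] by simp
  also have "\<dots> \<le> exp (- \<kappa> * T / (8 * real n))"
  proof -
    have "T / (4 * rate n) \<le> T / (2 * rate n)" using l0 T4 by (intro divide_left_mono) auto
    then show ?thesis using tail_exponent_le[OF n1 _ Uk] T4 by simp
  qed
  finally have "Q n (k - 1) \<le> Q n k * exp (- \<kappa> * T / (8 * real n))"
    unfolding Q_eq by (rule mult_left_mono) (rule Q_nonneg[OF n1])
  then show ?thesis by (simp only: mult.commute[of "exp (- \<kappa> * T / (8 * real n))"])
qed

lemma half_le_power_one_minus:
  fixes l :: real and M t :: nat
  assumes "0 < l" "real M ^ 2 \<le> l / 2" "t < M"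
  shows "1 / 2 \<le> (1 - real M / l) ^ t"
proof -
  have "real M \<le> real M ^ 2" using assms(3) by (simp add: power2_eq_square)
  then have "real M \<le> l" using assms(1,2) by linarith
  then have "real M / l \<le> 1" using assms(1) by simp
  then have "1 + real t * (- (real M / l)) \<le> (1 + (- (real M / l))) ^ t"
    by (intro Bernoulli_inequality) simp
  moreover have "real t * real M \<le> real M ^ 2" using assms(3) by (simp add: power2_eq_square mult_right_mono)
  then have "real t * real M / l \<le> 1 / 2" using assms(1,2) by (simp add: field_simps)
  ultimately show ?thesis by simp
qed

lemma Q_mono_towards_mean:
  fixes n M t :: nat
  assumes n1: "n \<ge> 1" and M: "real M \<le> rate n" and t: "t < M" and k: "base n \<le> k"
  shows "real_of_int k \<le> \<mu> n \<Longrightarrow> Q n k * (1 - real M / rate n) ^ t \<le> Q n (k + int t)"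
    and "\<mu> n < real_of_int k \<Longrightarrow> Q n k * (1 - real M / rate n) ^ t \<le> Q n (k - int t)"
proof -
  have l0: "rate n > 0" by (rule rate_pos[OF n1])
  define q where "q = 1 - real M / rate n"
  have q0: "0 \<le> q" unfolding q_def using M l0 by (simp add: field_simps)
  show "Q n k * q ^ t \<le> Q n (k + int t)" if "real_of_int k \<le> \<mu> n"
    using t
  proof (induction t)
    case (Suc t)
    have a: "base n \<le> k + int t" using k by simp
    have "q \<le> rate n / (rate n + real M)" unfolding q_def using l0 by (simp add: field_simps)
    also have "\<dots> \<le> rate n / real_of_int (k + int t - base n + 1)"
      using that base_add_rate[of n] Suc.prems a l0 by (intro divide_left_mono) auto
    finally have q_le: "q \<le> rate n / real_of_int (k + int t - base n + 1)" .
    have "k + int (Suc t) = k + int t + 1" by simp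
    then have step: "Q n (k + int (Suc t)) = Q n (k + int t) * (rate n / real_of_int (k + int t - base n + 1))"
      using Q_succ[OF n1 a] by (simp only:)
    have "Q n k * q ^ Suc t = Q n k * q ^ t * q" by (simp add: mult_ac)
    also have "\<dots> \<le> Q n (k + int t) * (rate n / real_of_int (k + int t - base n + 1))"
      using Suc q_le Q_nonneg[OF n1] q0 by (intro mult_mono) auto
    finally show ?case unfolding step .
  qed simp
  show "Q n k * q ^ t \<le> Q n (k - int t)" if "\<mu> n < real_of_int k"
    using t
  proof (induction t)
    case (Suc t)
    have gt: "real_of_int (k - int t - base n) > rate n - real t" using that base_add_rate[of n] by simp
    then have pos: "real_of_int (k - int t - base n) > 0" using Suc.prems M by linarith
    then have a: "base n \<le> k - int t - 1" by simp
    have Q_eq: "Q n (k - int t - 1) = Q n (k - int t) * (real_of_int (k - int t - base n) / rate n)"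
      using Q_succ[OF n1 a] pos l0 by (simp add: field_simps)
    have "q \<le> (rate n - real t) / rate n" unfolding q_def using l0 Suc.prems by (simp add: field_simps)
    also have "\<dots> \<le> real_of_int (k - int t - base n) / rate n" using gt l0 by (intro divide_right_mono) auto
    finally have "Q n k * q ^ t * q \<le> Q n (k - int t) * (real_of_int (k - int t - base n) / rate n)"
      using Suc Q_nonneg[OF n1] q0 by (intro mult_mono) auto
    then show ?case using Q_eq by (simp add: algebra_simps)
  qed simp
qed

text \<open>\<open>Q n\<close> is nearly constant on a block of \<open>M\<close> consecutive points next to any \<open>k\<close>,
  and these points carry total mass at most 1.\<close>
lemma Q_le_two_div:
  fixes n M :: nat
  assumes n1: "n \<ge> 1" and M1: "M \<ge> 1" and MM: "real M ^ 2 \<le> real n / (2 * \<kappa>)"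
  shows "Q n k \<le> 2 / real M"
proof (cases "base n \<le> k")
  case False
  then show ?thesis using Q_eq_0 by simp
next
  case True
  have l0: "rate n > 0" by (rule rate_pos[OF n1])
  have M2: "real M ^ 2 \<le> rate n / 2" using MM rate_bounds(1)[of n] by (simp add: field_simps)
  moreover have "real M \<le> real M ^ 2" using M1 by (simp add: power2_eq_square)
  ultimately have M: "real M \<le> rate n" using l0 by linarith
  have half: "Q n k / 2 \<le> Q n k * (1 - real M / rate n) ^ t" if "t < M" for t
    using mult_left_mono[OF half_le_power_one_minus[OF l0 M2 that] Q_nonneg[OF n1, of k]] by simp
  note block = pmf_le_of_block[OF Q_nonneg[OF n1] Q_has_sum[OF n1]]
  show ?thesis
  proof (cases "real_of_int k \<le> \<mu> n")
    case True
    show ?thesis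
    proof (rule block[where g = "\<lambda>t. k + int t"])
      fix t assume t: "t < M"
      show "Q n k / 2 \<le> Q n (k + int t)"
        by (rule order_trans[OF half[OF t] Q_mono_towards_mean(1)[OF n1 M t \<open>base n \<le> k\<close> True]])
    qed (use M1 in \<open>auto simp: inj_def\<close>)
  next
    case False
    show ?thesis
    proof (rule block[where g = "\<lambda>t. k - int t"])
      fix t assume t: "t < M"
      from False have "\<mu> n < real_of_int k" by simp
      then show "Q n k / 2 \<le> Q n (k - int t)"
        by (rule order_trans[OF half[OF t] Q_mono_towards_mean(2)[OF n1 M t \<open>base n \<le> k\<close>]])
    qed (use M1 in \<open>auto simp: inj_def\<close>)
  qed
qed

lemma has_sum_P: "(P n has_sum 1) UNIV"
  unfolding P_def by (rule has_sum_cw_pmf)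

lemma P_Q_distances_bounded:
  assumes "n \<ge> 1"
  shows "0 \<le> d_loc (cdf_of (P n)) (cdf_of (Q n))" "d_loc (cdf_of (P n)) (cdf_of (Q n)) \<le> 1"
    "d_TV (cdf_of (P n)) (cdf_of (Q n)) \<le> 1"
  using d_loc_cdf_of_pmf_bounds[OF P_nonneg Q_nonneg has_sum_P Q_has_sum, OF assms assms]
    d_TV_cdf_of_pmf_le_one[OF P_nonneg Q_nonneg has_sum_P Q_has_sum, OF assms assms] by auto

subsection \<open>Comparison on a window around the mean\<close>

definition "window n T = {k::int. \<bar>real_of_int k - \<mu> n\<bar> \<le> T}"

text \<open>The conditions on the half-width \<open>T\<close> of the comparison window under which
  the estimates below hold; \<open>T = n^(5/9)\<close> satisfies them for large \<open>n\<close>.\<close>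
definition admissible :: "nat \<Rightarrow> real \<Rightarrow> bool" where
  "admissible n T \<longleftrightarrow> n \<ge> 1 \<and> T \<ge> 4 \<and> T + 3 \<le> real n * p0 / 2 \<and> T + 3 \<le> real n * (1 - p0) / 2
     \<and> T + 3 \<le> real n / (2 * \<kappa>) \<and> \<beta> \<le> real n * (1 - \<beta>)
     \<and> K1 + \<kappa> / 2 + K2 * (T + 3)^2 / real n \<le> 3 * \<kappa> * T / 8
     \<and> log_err K1 K2 n T \<le> 1/4 \<and> tail_err \<kappa> n T \<le> 1/4"

lemma admissibleD:
  assumes "admissible n T"
  shows "n \<ge> 1" "T \<ge> 4" "T + 3 \<le> real n * p0 / 2" "T + 3 \<le> real n * (1 - p0) / 2"
    "T + 3 \<le> real n / (2 * \<kappa>)" "\<beta> \<le> real n * (1 - \<beta>)"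
    "K1 + \<kappa> / 2 + K2 * (T + 3)^2 / real n \<le> 3 * \<kappa> * T / 8"
    "log_err K1 K2 n T \<le> 1/4" "tail_err \<kappa> n T \<le> 1/4"
  using assms unfolding admissible_def by auto

lemma tail_rate_bounds:
  assumes "admissible n T"
  shows "0 < tail_rate \<kappa> n T" "tail_rate \<kappa> n T \<le> 1"
proof -
  note A = admissibleD[OF assms]
  have n: "real n > 0" using A(1) by simp
  show "0 < tail_rate \<kappa> n T" unfolding tail_rate_def using kappa_pos A(2) n by simp
  have "\<kappa> * T \<le> \<kappa> * (real n / (2 * \<kappa>))" using A(5) kappa_pos by (intro mult_left_mono) auto
  also have "\<dots> = real n / 2" using kappa_pos by simp
  finally show "tail_rate \<kappa> n T \<le> 1" unfolding tail_rate_def using n by (simp add: field_simps)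
qed

lemma tail_err_nonneg: "admissible n T \<Longrightarrow> 0 \<le> tail_err \<kappa> n T"
  unfolding tail_err_def using tail_rate_bounds(1) by (intro mult_nonneg_nonneg divide_nonneg_pos) auto

lemma log_err_nonneg: "admissible n T \<Longrightarrow> 0 \<le> log_err K1 K2 n T"
  unfolding log_err_def using admissibleD(2)[of n T] K_pos
  by (intro mult_nonneg_nonneg add_nonneg_nonneg divide_nonneg_nonneg) auto

lemma P_tails:
  assumes "admissible n T"
  shows "infsum (P n) {k. \<mu> n + T < real_of_int k} \<le> tail_err \<kappa> n T"
    "infsum (P n) {k. real_of_int k < \<mu> n - T} \<le> tail_err \<kappa> n T"
proof -
  note A = admissibleD[OF assms]
  note tails = infsum_outside_window_le[OF P_nonneg pmf_le_one[OF P_nonneg has_sum_P]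
      has_sum_imp_summable[OF has_sum_P] tail_rate_bounds[OF assms] A(2)]
  have rate: "exp (- tail_rate \<kappa> n T) = exp (- \<kappa> * T / (8 * real n))" unfolding tail_rate_def by simp
  note succ = P_succ_le_tail[OF A(1,2,3,4,7,6)]
  note pred = P_pred_le_tail[OF A(1,2,3,4,7,6)]
  show "infsum (P n) {k. \<mu> n + T < real_of_int k} \<le> tail_err \<kappa> n T"
    unfolding tail_err_def by (rule tails(1)) (use succ pred rate in auto)
  show "infsum (P n) {k. real_of_int k < \<mu> n - T} \<le> tail_err \<kappa> n T"
    unfolding tail_err_def by (rule tails(2)) (use succ pred rate in auto)
qed

lemma Q_tails:
  assumes "admissible n T"
  shows "infsum (Q n) {k. \<mu> n + T < real_of_int k} \<le> tail_err \<kappa> n T"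
    "infsum (Q n) {k. real_of_int k < \<mu> n - T} \<le> tail_err \<kappa> n T"
proof -
  note A = admissibleD[OF assms]
  note tails = infsum_outside_window_le[OF Q_nonneg[OF A(1)] pmf_le_one[OF Q_nonneg Q_has_sum, OF A(1) A(1)]
      has_sum_imp_summable[OF Q_has_sum[OF A(1)]] tail_rate_bounds[OF assms] A(2)]
  have rate: "exp (- tail_rate \<kappa> n T) = exp (- \<kappa> * T / (8 * real n))" unfolding tail_rate_def by simp
  note succ = Q_succ_le_tail[OF A(1,2,5)]
  note pred = Q_pred_le_tail[OF A(1,2,5)]
  show "infsum (Q n) {k. \<mu> n + T < real_of_int k} \<le> tail_err \<kappa> n T"
    unfolding tail_err_def by (rule tails(1)) (use succ pred rate in auto)
  show "infsum (Q n) {k. real_of_int k < \<mu> n - T} \<le> tail_err \<kappa> n T"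
    unfolding tail_err_def by (rule tails(2)) (use succ pred rate in auto)
qed

lemma finite_window: "finite (window n T)"
proof -
  have "window n T = {\<lceil>\<mu> n - T\<rceil>..\<lfloor>\<mu> n + T\<rfloor>}"
    unfolding window_def by (auto simp: abs_le_iff ceiling_le_iff le_floor_iff)
  then show ?thesis by simp
qed

lemma infsum_compl_window_le:
  fixes f :: "int \<Rightarrow> real"
  assumes "T \<ge> 0" "f summable_on UNIV"
    and "infsum f {k. \<mu> n + T < real_of_int k} \<le> \<tau>" "infsum f {k. real_of_int k < \<mu> n - T} \<le> \<tau>"
  shows "infsum f (- window n T) \<le> 2 * \<tau>"
proof -
  have "- window n T = {k. \<mu> n + T < real_of_int k} \<union> {k. real_of_int k < \<mu> n - T}"
    unfolding window_def by auto
  moreover have "{k. \<mu> n + T < real_of_int k} \<inter> {k::int. real_of_int k < \<mu> n - T} = {}"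
    using assms(1) by auto
  ultimately have "infsum f (- window n T)
      = infsum f {k. \<mu> n + T < real_of_int k} + infsum f {k. real_of_int k < \<mu> n - T}"
    using infsum_Un_disjoint assms(2) summable_on_subset by (metis subset_UNIV)
  then show ?thesis using assms(3,4) by linarith
qed

lemma window_mass:
  assumes "admissible n T"
  shows "1 - 2 * tail_err \<kappa> n T \<le> sum (P n) (window n T)" "sum (P n) (window n T) \<le> 1"
    "1 - 2 * tail_err \<kappa> n T \<le> sum (Q n) (window n T)" "sum (Q n) (window n T) \<le> 1"
proof -
  note A = admissibleD[OF assms]
  have T0: "T \<ge> 0" using A(2) by simp
  have "infsum (P n) (- window n T) \<le> 2 * tail_err \<kappa> n T"
    by (rule infsum_compl_window_le[OF T0 has_sum_imp_summable[OF has_sum_P] P_tails[OF assms]])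
  moreover have "infsum (Q n) (- window n T) \<le> 2 * tail_err \<kappa> n T"
    by (rule infsum_compl_window_le[OF T0 has_sum_imp_summable[OF Q_has_sum[OF A(1)]] Q_tails[OF assms]])
  moreover have "0 \<le> infsum (P n) (- window n T)" "0 \<le> infsum (Q n) (- window n T)"
    using P_nonneg Q_nonneg[OF A(1)] by (simp_all add: infsum_nonneg)
  ultimately show "1 - 2 * tail_err \<kappa> n T \<le> sum (P n) (window n T)" "sum (P n) (window n T) \<le> 1"
    "1 - 2 * tail_err \<kappa> n T \<le> sum (Q n) (window n T)" "sum (Q n) (window n T) \<le> 1"
    using sum_eq_one_minus_infsum_compl[OF has_sum_P[of n] finite_window[of n T]]
      sum_eq_one_minus_infsum_compl[OF Q_has_sum[OF A(1)] finite_window[of n T]] by linarith+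
qed

lemma abs_P_Q_le_window:
  assumes "admissible n T" "k \<in> window n T"
  shows "\<bar>P n k - Q n k\<bar> \<le> 8 * (log_err K1 K2 n T + 2 * tail_err \<kappa> n T) * Q n k"
proof -
  note A = admissibleD[OF assms(1)]
  have osc: "P n i > 0" "Q n i > 0"
      "\<bar>ln (P n i) - ln (Q n i) - (ln (P n \<lceil>\<mu> n - T\<rceil>) - ln (Q n \<lceil>\<mu> n - T\<rceil>))\<bar> \<le> log_err K1 K2 n T"
    if "i \<in> window n T" for i
  proof -
    have "\<bar>real_of_int i - \<mu> n\<bar> \<le> T" using that unfolding window_def by simp
    from ln_P_Q_oscillation[OF A(1) _ _ _ A(3,4,5) this] A(2)
    show "P n i > 0" "Q n i > 0"
      "\<bar>ln (P n i) - ln (Q n i) - (ln (P n \<lceil>\<mu> n - T\<rceil>) - ln (Q n \<lceil>\<mu> n - T\<rceil>))\<bar> \<le> log_err K1 K2 n T"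
      unfolding log_err_def by simp_all
  qed
  have \<tau>: "0 \<le> 2 * tail_err \<kappa> n T" "2 * tail_err \<kappa> n T \<le> 1/2"
    using tail_err_nonneg[OF assms(1)] A(9) by simp_all
  show ?thesis
    using abs_diff_le_of_log_ratio_window[OF finite_window osc log_err_nonneg[OF assms(1)] A(8) \<tau>
        window_mass[OF assms(1)] assms(2)] .
qed

lemma abs_P_Q_le_tail:
  assumes "admissible n T" "k \<notin> window n T"
  shows "\<bar>P n k - Q n k\<bar> \<le> tail_err \<kappa> n T"
proof -
  note A = admissibleD[OF assms(1)]
  have "k \<in> {k. \<mu> n + T < real_of_int k} \<or> k \<in> {k. real_of_int k < \<mu> n - T}"
    using assms(2) unfolding window_def by auto
  then have "P n k \<le> tail_err \<kappa> n T" "Q n k \<le> tail_err \<kappa> n T"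
    using pmf_le_infsum[OF P_nonneg has_sum_imp_summable[OF has_sum_P]] P_tails[OF assms(1)]
      pmf_le_infsum[OF Q_nonneg has_sum_imp_summable[OF Q_has_sum], OF A(1) A(1)] Q_tails[OF assms(1)]
    by (meson order_trans)+
  then show ?thesis using P_nonneg[of n k] Q_nonneg[OF A(1), of k] by (simp add: abs_le_iff)
qed

lemma block_length_exists:
  assumes "real n \<ge> 8 * \<kappa>"
  obtains M :: nat where "M \<ge> 1" "real M ^ 2 \<le> real n / (2 * \<kappa>)"
    "1 / real M \<le> 2 * sqrt (2 * \<kappa>) / sqrt (real n)"
proof
  define s where "s = sqrt (real n / (2 * \<kappa>))"
  have "sqrt 4 \<le> s" unfolding s_def using assms kappa_pos by (intro real_sqrt_le_mono) (simp add: field_simps)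
  then have s2: "s \<ge> 2" by simp
  have Ms: "real (nat \<lfloor>s\<rfloor>) \<le> s" "s - 1 \<le> real (nat \<lfloor>s\<rfloor>)" using s2 by linarith+
  show "nat \<lfloor>s\<rfloor> \<ge> 1" using Ms s2 by linarith
  have "real (nat \<lfloor>s\<rfloor>) ^ 2 \<le> s ^ 2" using Ms s2 by (intro power_mono) auto
  also have "\<dots> = real n / (2 * \<kappa>)" unfolding s_def using kappa_pos by simp
  finally show "real (nat \<lfloor>s\<rfloor>) ^ 2 \<le> real n / (2 * \<kappa>)" .
  have "s / 2 \<le> real (nat \<lfloor>s\<rfloor>)" using Ms s2 by linarith
  then have "1 / real (nat \<lfloor>s\<rfloor>) \<le> 1 / (s / 2)" using s2 by (intro divide_left_mono) auto
  also have "\<dots> = 2 * sqrt (2 * \<kappa>) / sqrt (real n)"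
    unfolding s_def using kappa_pos by (simp add: real_sqrt_divide)
  finally show "1 / real (nat \<lfloor>s\<rfloor>) \<le> 2 * sqrt (2 * \<kappa>) / sqrt (real n)" .
qed

text \<open>Inside the window the relative error of \<open>P n\<close> against \<open>Q n\<close> is small, and \<open>Q n k\<close>
  is at most \<open>O(n^(-1/2))\<close> because \<open>Q n\<close> is nearly flat over blocks of length
  \<open>\<surd>n\<close>; outside the window both masses are tiny.\<close>
lemma d_loc_P_Q_le:
  assumes "admissible n T"
  shows "d_loc (cdf_of (P n)) (cdf_of (Q n))
    \<le> 32 * sqrt (2 * \<kappa>) * (log_err K1 K2 n T + 2 * tail_err \<kappa> n T) / sqrt (real n) + tail_err \<kappa> n T"
proof -
  note A = admissibleD[OF assms]
  have "4 * \<kappa> \<le> T * \<kappa>" using A(2) kappa_pos by (intro mult_right_mono) auto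
  moreover have "(T + 3) * (2 * \<kappa>) \<le> real n" using A(5) kappa_pos by (simp add: field_simps)
  moreover have "(T + 3) * (2 * \<kappa>) = 2 * (T * \<kappa>) + 6 * \<kappa>" by (simp add: algebra_simps)
  ultimately have "real n \<ge> 8 * \<kappa>" by linarith
  then obtain M where M: "M \<ge> 1" "real M ^ 2 \<le> real n / (2 * \<kappa>)"
    "1 / real M \<le> 2 * sqrt (2 * \<kappa>) / sqrt (real n)" by (rule block_length_exists)
  define \<delta> where "\<delta> = 8 * (log_err K1 K2 n T + 2 * tail_err \<kappa> n T)"
  have \<delta>: "0 \<le> \<delta>" unfolding \<delta>_def using log_err_nonneg tail_err_nonneg assms by simp
  have "\<bar>P n k - Q n k\<bar> \<le> \<delta> * (2 / real M) + tail_err \<kappa> n T" for k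
  proof (cases "k \<in> window n T")
    case True
    have "\<bar>P n k - Q n k\<bar> \<le> \<delta> * Q n k" unfolding \<delta>_def by (rule abs_P_Q_le_window[OF assms True])
    also have "\<dots> \<le> \<delta> * (2 / real M)" by (intro mult_left_mono Q_le_two_div[OF A(1) M(1,2)] \<delta>)
    finally show ?thesis using tail_err_nonneg[OF assms] by linarith
  next
    case False
    have "0 \<le> \<delta> * (2 / real M)" using \<delta> by simp
    then show ?thesis using abs_P_Q_le_tail[OF assms False] by linarith
  qed
  then have "d_loc (cdf_of (P n)) (cdf_of (Q n)) \<le> \<delta> * (2 / real M) + tail_err \<kappa> n T"
    by (rule d_loc_cdf_of_le[OF has_sum_imp_summable[OF has_sum_P] has_sum_imp_summable[OF Q_has_sum[OF A(1)]]])
  also have "\<delta> * (2 / real M) \<le> \<delta> * (2 * (2 * sqrt (2 * \<kappa>) / sqrt (real n)))"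
    using M(3) \<delta> by (intro mult_left_mono) auto
  finally show ?thesis unfolding \<delta>_def by (simp add: field_simps)
qed

lemma d_TV_P_Q_le:
  assumes "admissible n T"
  shows "d_TV (cdf_of (P n)) (cdf_of (Q n)) \<le> 4 * log_err K1 K2 n T + 10 * tail_err \<kappa> n T"
proof -
  note A = admissibleD[OF assms]
  define \<delta> where "\<delta> = 8 * (log_err K1 K2 n T + 2 * tail_err \<kappa> n T)"
  have \<delta>: "0 \<le> \<delta>" unfolding \<delta>_def using log_err_nonneg tail_err_nonneg assms by simp
  have compl: "infsum (P n) (- window n T) \<le> 2 * tail_err \<kappa> n T" "infsum (Q n) (- window n T) \<le> 2 * tail_err \<kappa> n T"
    using infsum_compl_window_le[OF _ has_sum_imp_summable[OF has_sum_P] P_tails[OF assms]]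
      infsum_compl_window_le[OF _ has_sum_imp_summable[OF Q_has_sum[OF A(1)]] Q_tails[OF assms]] A(2)
    by simp_all
  have "infsum (\<lambda>k. \<bar>P n k - Q n k\<bar>) UNIV
      \<le> (\<Sum>k\<in>window n T. \<delta> * Q n k) + 2 * tail_err \<kappa> n T + 2 * tail_err \<kappa> n T"
    by (rule infsum_abs_diff_le_window[OF has_sum_imp_summable[OF has_sum_P]
          has_sum_imp_summable[OF Q_has_sum[OF A(1)]] P_nonneg Q_nonneg[OF A(1)] finite_window _ compl])
      (use abs_P_Q_le_window[OF assms] in \<open>simp add: \<delta>_def\<close>)
  also have "(\<Sum>k\<in>window n T. \<delta> * Q n k) \<le> \<delta>"
    using window_mass(4)[OF assms] \<delta> by (simp add: sum_distrib_left[symmetric] mult_left_le)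
  finally show ?thesis
    unfolding d_TV_cdf_of[OF has_sum_imp_summable[OF has_sum_P] has_sum_imp_summable[OF Q_has_sum[OF A(1)]]]
    by (simp add: \<delta>_def)
qed

lemma eventually_admissible: "eventually (\<lambda>n. admissible n (real n powr (5/9))) sequentially"
proof -
  have "eventually (\<lambda>n::nat. n \<ge> 1) sequentially" by (rule eventually_ge_at_top)
  moreover have "eventually (\<lambda>n::nat. \<beta> \<le> real n * (1 - \<beta>)) sequentially"
    using beta1 by (rule eventually_le_mult_one_minus)
  moreover note window_width_asymptotics(1)[OF kappa_pos] window_width_asymptotics(3)[OF kappa_pos, of K1 K2]
  moreover have "eventually (\<lambda>n. real n powr (5/9) + 3 \<le> real n * p0 / 2) sequentially"
    using window_width_asymptotics(2)[OF p0_bounds(1)] .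
  moreover have "eventually (\<lambda>n. real n powr (5/9) + 3 \<le> real n * (1 - p0) / 2) sequentially"
    using window_width_asymptotics(2)[of "1 - p0"] p0_bounds by simp
  moreover have "eventually (\<lambda>n. real n powr (5/9) + 3 \<le> real n / (2 * \<kappa>)) sequentially"
    using window_width_asymptotics(2)[of "1 / \<kappa>"] kappa_pos by (simp add: field_simps)
  moreover note log_err_tail_err_asymptotics(1,2)[OF K_pos kappa_pos]
  ultimately show ?thesis by eventually_elim (unfold admissible_def, (intro conjI; assumption))
qed

lemma eventually_d_loc_P_Q_le: "eventually (\<lambda>n. d_loc (cdf_of (P n)) (cdf_of (Q n)) \<le> real n powr (-3/4)) sequentially"
  using eventually_admissible log_err_tail_err_asymptotics(3)[OF K_pos kappa_pos]
  by eventually_elim (rule order_trans[OF d_loc_P_Q_le]; assumption)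

lemma eventually_d_TV_P_Q_le:
  "eventually (\<lambda>n. d_TV (cdf_of (P n)) (cdf_of (Q n)) \<le> (9 * K2 + 1) * real n powr (-1/3)) sequentially"
  using eventually_admissible log_err_tail_err_asymptotics(4)[OF K_pos kappa_pos]
  by eventually_elim (rule order_trans[OF d_TV_P_Q_le]; assumption)

lemma d_loc_P_Q_bigo: "(\<lambda>n. d_loc (cdf_of (P n)) (cdf_of (Q n))) \<in> O(\<lambda>n. real n powr (-3/4))"
proof (rule bigoI[where c = 1])
  have "eventually (\<lambda>n::nat. n \<ge> 1) sequentially" by (rule eventually_ge_at_top)
  with eventually_d_loc_P_Q_le
  show "eventually (\<lambda>n. norm (d_loc (cdf_of (P n)) (cdf_of (Q n))) \<le> 1 * norm (real n powr (-3/4))) sequentially"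
    by eventually_elim (simp add: P_Q_distances_bounded(1))
qed

lemma P_Q_uniform_bounds:
  "\<exists>C. \<forall>n::nat. n \<ge> 1 \<longrightarrow> d_loc (cdf_of (P n)) (cdf_of (Q n)) \<le> C * real n powr (-3/4)
      \<and> d_TV (cdf_of (P n)) (cdf_of (Q n)) \<le> C * real n powr (-1/3)"
proof -
  have "eventually (\<lambda>n. d_loc (cdf_of (P n)) (cdf_of (Q n)) \<le> 1 * real n powr (-3/4)) sequentially"
    using eventually_d_loc_P_Q_le by simp
  from uniform_bound_of_eventually_bound[OF this P_Q_distances_bounded(2)]
  obtain C1 where C1: "\<forall>n \<ge> 1. d_loc (cdf_of (P n)) (cdf_of (Q n)) \<le> C1 * real n powr (-3/4)"
    by auto
  from uniform_bound_of_eventually_bound[OF eventually_d_TV_P_Q_le P_Q_distances_bounded(3)]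
  obtain C2 where C2: "\<forall>n \<ge> 1. d_TV (cdf_of (P n)) (cdf_of (Q n)) \<le> C2 * real n powr (-1/3)"
    by auto
  show ?thesis
  proof (intro exI[of _ "max C1 C2"] allI impI conjI)
    fix n :: nat
    assume "n \<ge> 1"
    show "d_loc (cdf_of (P n)) (cdf_of (Q n)) \<le> max C1 C2 * real n powr (-3/4)"
      using order_trans[OF C1[rule_format, OF \<open>n \<ge> 1\<close>] mult_right_mono[OF max.cobounded1 powr_ge_zero]] .
    show "d_TV (cdf_of (P n)) (cdf_of (Q n)) \<le> max C1 C2 * real n powr (-1/3)"
      using order_trans[OF C2[rule_format, OF \<open>n \<ge> 1\<close>] mult_right_mono[OF max.cobounded2 powr_ge_zero]] .
  qed
qed

lemma d_loc_P_Q_smallo: "(\<lambda>n. d_loc (cdf_of (P n)) (cdf_of (Q n))) \<in> o(\<lambda>n. real n powr (-1/2))"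
proof -
  have "(\<lambda>n::nat. real n powr (-3/4)) \<in> o(\<lambda>n. real n powr (-1/2))" by real_asymp
  with d_loc_P_Q_bigo show ?thesis by (rule landau_o.big_small_trans)
qed

end

theorem theorem10:
  fixes \<beta> :: real
  assumes "0 < \<beta>" and "\<beta> < 1"
  shows "(\<exists>C. \<forall>n::nat. n \<ge> 1 \<longrightarrow>
            d_loc (cdf_of (cw_pmf \<beta> 0 n)) (cdf_of (tp_pmf 0 (real n / (4 * (1 - \<beta>)))))
              \<le> C * real n powr (-3/4) \<and>
            d_TV (cdf_of (cw_pmf \<beta> 0 n)) (cdf_of (tp_pmf 0 (real n / (4 * (1 - \<beta>)))))
              \<le> C * real n powr (-1/3))
       \<and> (\<forall>h m0. m0 = tanh (\<beta> * m0 + h) \<longrightarrow>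
            (\<lambda>n::nat. d_loc (cdf_of (cw_pmf \<beta> h n))
               (cdf_of (tp_pmf (real n * m0 / 2)
                  (real n * (1 - m0\<^sup>2) / (4 * (1 - \<beta> + \<beta> * m0\<^sup>2))))))
            \<in> o(\<lambda>n. real n powr (-1/2)))"
proof (intro conjI allI impI)
  interpret zero_field: curie_weiss \<beta> 0 0 by unfold_locales (use assms in simp_all)
  have "zero_field.P n = cw_pmf \<beta> 0 n" "zero_field.Q n = tp_pmf 0 (real n / (4 * (1 - \<beta>)))" for n
    unfolding zero_field.P_def zero_field.Q_def zero_field.\<mu>_def zero_field.s2_def by simp_all
  with zero_field.P_Q_uniform_bounds show "\<exists>C. \<forall>n::nat. n \<ge> 1 \<longrightarrow>
      d_loc (cdf_of (cw_pmf \<beta> 0 n)) (cdf_of (tp_pmf 0 (real n / (4 * (1 - \<beta>))))) \<le> C * real n powr (-3/4) \<and>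
      d_TV (cdf_of (cw_pmf \<beta> 0 n)) (cdf_of (tp_pmf 0 (real n / (4 * (1 - \<beta>))))) \<le> C * real n powr (-1/3)"
    by simp
next
  fix h m0 :: real
  assume "m0 = tanh (\<beta> * m0 + h)"
  then interpret curie_weiss \<beta> h m0 by unfold_locales (use assms in simp_all)
  show "(\<lambda>n::nat. d_loc (cdf_of (cw_pmf \<beta> h n))
      (cdf_of (tp_pmf (real n * m0 / 2) (real n * (1 - m0\<^sup>2) / (4 * (1 - \<beta> + \<beta> * m0\<^sup>2))))))
    \<in> o(\<lambda>n. real n powr (-1/2))"
    using d_loc_P_Q_smallo unfolding P_def Q_def \<mu>_def s2_def .
qed

end
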